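(* Let $G$ be a connected graph of order $n$ with maximum degree $\Delta(G)\leq n-2$, and let $w\in V(G)$ with $d(w)=\Delta(G)$. If the graph $G-N[w]$ (obtained by deleting $w$ and all its neighbours) has a Hamiltonian cycle, then $prc(G)\leq \frac{n+\Delta(G)}{2}+1$.
   Context: A path in an edge-coloured graph is a rainbow path if its edges receive pairwise distinct colours. An edge-colouring is proper if adjacent edges receive distinct colours. The proper rainbow connection number $prc(G)$ of a nontrivial connected graph $G$ is the minimum number of colours in a proper edge-colouring of $G$ such that every two distinct vertices are joined by a rainbow path. $N[w]$ denotes the closed neighbourhood of $w$. *)

theory Defs
  imports Complex_Main
begin

definition simple_graph :: "'a set \<Rightarrow> 'a set set \<Rightarrow> bool" where
  "simple_graph V E \<longleftrightarrow> finite V \<and> (\<forall>e\<in>E. e \<subseteq> V \<and> card e = 2)"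

definition neighbours :: "'a set \<Rightarrow> 'a set set \<Rightarrow> 'a \<Rightarrow> 'a set" where
  "neighbours V E v = {u \<in> V. {u, v} \<in> E}"

definition degree :: "'a set \<Rightarrow> 'a set set \<Rightarrow> 'a \<Rightarrow> nat" where
  "degree V E v = card (neighbours V E v)"

definition max_degree :: "'a set \<Rightarrow> 'a set set \<Rightarrow> nat" where
  "max_degree V E = Max (degree V E ` V)"

definition closed_nbhd :: "'a set \<Rightarrow> 'a set set \<Rightarrow> 'a \<Rightarrow> 'a set" where
  "closed_nbhd V E w = insert w (neighbours V E w)"

definition del_vertices_E :: "'a set \<Rightarrow> 'a set set \<Rightarrow> 'a set \<Rightarrow> 'a set set" where
  "del_vertices_E V E S = {e \<in> E. e \<subseteq> V - S}"

fun walk_edges :: "'a list \<Rightarrow> 'a set list" where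
  "walk_edges (x # y # xs) = {x, y} # walk_edges (y # xs)"
| "walk_edges _ = []"

definition is_path :: "'a set \<Rightarrow> 'a set set \<Rightarrow> 'a list \<Rightarrow> 'a \<Rightarrow> 'a \<Rightarrow> bool" where
  "is_path V E p u v \<longleftrightarrow> p \<noteq> [] \<and> hd p = u \<and> last p = v \<and> distinct p \<and>
     set p \<subseteq> V \<and> set (walk_edges p) \<subseteq> E"

definition connected_graph :: "'a set \<Rightarrow> 'a set set \<Rightarrow> bool" where
  "connected_graph V E \<longleftrightarrow> (\<forall>u\<in>V. \<forall>v\<in>V. \<exists>p. is_path V E p u v)"

definition hamiltonian :: "'a set \<Rightarrow> 'a set set \<Rightarrow> bool" where
  "hamiltonian V E \<longleftrightarrow> (\<exists>p. distinct p \<and> set p = V \<and> length p \<ge> 3 \<and>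
     set (walk_edges p) \<subseteq> E \<and> {last p, hd p} \<in> E)"

definition proper_colouring :: "'a set set \<Rightarrow> ('a set \<Rightarrow> nat) \<Rightarrow> bool" where
  "proper_colouring E c \<longleftrightarrow> (\<forall>e\<in>E. \<forall>f\<in>E. e \<noteq> f \<and> e \<inter> f \<noteq> {} \<longrightarrow> c e \<noteq> c f)"

definition rainbow_path :: "'a set \<Rightarrow> 'a set set \<Rightarrow> ('a set \<Rightarrow> nat) \<Rightarrow> 'a list \<Rightarrow> 'a \<Rightarrow> 'a \<Rightarrow> bool" where
  "rainbow_path V E c p u v \<longleftrightarrow> is_path V E p u v \<and> distinct (map c (walk_edges p))"

definition rainbow_connected :: "'a set \<Rightarrow> 'a set set \<Rightarrow> ('a set \<Rightarrow> nat) \<Rightarrow> bool" where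
  "rainbow_connected V E c \<longleftrightarrow>
     (\<forall>u\<in>V. \<forall>v\<in>V. u \<noteq> v \<longrightarrow> (\<exists>p. rainbow_path V E c p u v))"

definition prc :: "'a set \<Rightarrow> 'a set set \<Rightarrow> nat" where
  "prc V E = (LEAST k. \<exists>c. c ` E \<subseteq> {..<k} \<and> proper_colouring E c \<and> rainbow_connected V E c)"

end

theory Submission
  imports Defs
begin

text \<open>
  Let \<open>D = \<Delta>(G)\<close>, \<open>N = N(w)\<close> and let \<open>C\<close> be the Hamiltonian cycle of \<open>G - N[w]\<close>, of length
  \<open>m = n - D - 1\<close>; put \<open>q = \<lceil>m/2\<rceil>\<close>. The \<open>t\<close>-th edge of \<open>C\<close> gets colour \<open>D + 1 + (t mod q)\<close>, so
  any two vertices of \<open>C\<close> are joined by an arc of at most \<open>\<lfloor>m/2\<rfloor>\<close> edges with distinct colours.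
  All other edges get colours \<open>0, \<dots>, D\<close> by a strengthening of Vizing's theorem in which the
  colour class \<open>D\<close> avoids \<open>w\<close> and contains an edge \<open>u v\<^sub>0\<close> from \<open>N\<close> to \<open>C\<close>. A vertex of \<open>N[w]\<close>
  then reaches \<open>C\<close> along \<open>x w u v\<^sub>0\<close> followed by an arc, and two vertices of \<open>N[w]\<close> are joined
  through \<open>w\<close>. Altogether \<open>D + 1 + q \<le> (n + D)/2 + 1\<close> colours are used.
\<close>

section \<open>Edge colourings and Kempe chains\<close>

definition edge_degree :: "'a set set \<Rightarrow> 'a \<Rightarrow> nat" where
  "edge_degree F x = card {e\<in>F. x \<in> e}"

definition missing :: "'a set set \<Rightarrow> ('a set \<Rightarrow> nat) \<Rightarrow> 'a \<Rightarrow> nat \<Rightarrow> bool" where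
  "missing F c x i \<longleftrightarrow> (\<forall>e\<in>F. x \<in> e \<longrightarrow> c e \<noteq> i)"

definition edge_colourable :: "'a set set \<Rightarrow> nat set \<Rightarrow> bool" where
  "edge_colourable F P \<longleftrightarrow> (\<exists>c. c ` F \<subseteq> P \<and> proper_colouring F c)"

lemma proper_colouringD:
  "proper_colouring F c \<Longrightarrow> e \<in> F \<Longrightarrow> f \<in> F \<Longrightarrow> e \<noteq> f \<Longrightarrow> e \<inter> f \<noteq> {} \<Longrightarrow> c e \<noteq> c f"
  unfolding proper_colouring_def by simp

lemma proper_colouring_subset: "proper_colouring F c \<Longrightarrow> G \<subseteq> F \<Longrightarrow> proper_colouring G c"
  unfolding proper_colouring_def by (meson subsetD)

lemma doubleton_card_2_neq: "card {a, b} = 2 \<Longrightarrow> a \<noteq> b"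
  by (cases "a = b") simp_all

lemma edge_eq_doubleton:
  assumes "card e = 2" "v \<in> e" "u \<in> e" "u \<noteq> v"
  shows "e = {v, u}"
proof -
  obtain a b where "e = {a, b}" "a \<noteq> b"
    using assms(1) by (meson card_2_iff)
  then show ?thesis
    using assms(2-4) by auto
qed

lemma finite_Union_edges: "finite F \<Longrightarrow> \<forall>e\<in>F. card e = 2 \<Longrightarrow> finite (\<Union>F)"
  by (metis card.infinite finite_Union zero_neq_numeral)

lemma edge_degree_mono: "finite E \<Longrightarrow> F \<subseteq> E \<Longrightarrow> edge_degree F x \<le> edge_degree E x"
  unfolding edge_degree_def by (rule card_mono) auto

lemma edge_degree_eq_card_neighbours:
  assumes "\<forall>e\<in>E. card e = 2"
  shows "edge_degree E v = card {u. {v, u} \<in> E}"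
proof -
  have "bij_betw (\<lambda>u. {v, u}) {u. {v, u} \<in> E} {e\<in>E. v \<in> e}"
    unfolding bij_betw_def
  proof
    show "inj_on (\<lambda>u. {v, u}) {u. {v, u} \<in> E}"
      by (auto simp: inj_on_def doubleton_eq_iff)
    show "(\<lambda>u. {v, u}) ` {u. {v, u} \<in> E} = {e\<in>E. v \<in> e}"
    proof
      show "(\<lambda>u. {v, u}) ` {u. {v, u} \<in> E} \<subseteq> {e\<in>E. v \<in> e}"
        by auto
      show "{e\<in>E. v \<in> e} \<subseteq> (\<lambda>u. {v, u}) ` {u. {v, u} \<in> E}"
      proof
        fix e assume "e \<in> {e\<in>E. v \<in> e}"
        then have e: "e \<in> E" "v \<in> e" by auto
        obtain a b where "e = {a, b}" "a \<noteq> b"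
          using assms e(1) by (meson card_2_iff)
        then have "e = {v, if a = v then b else a}"
          using e by auto
        then show "e \<in> (\<lambda>u. {v, u}) ` {u. {v, u} \<in> E}"
          using e by auto
      qed
    qed
  qed
  then show ?thesis
    unfolding edge_degree_def by (simp add: bij_betw_same_card)
qed

lemma edge_degree_delete_vertex:
  assumes "finite E" "\<forall>e\<in>E. card e = 2" "{v, u} \<in> E"
  shows "edge_degree E u = Suc (edge_degree {e\<in>E. v \<notin> e} u)"
proof -
  have "u \<noteq> v"
    using assms(2,3) doubleton_card_2_neq by fastforce
  then have "{e\<in>E. u \<in> e} = insert {v, u} {e\<in>{e\<in>E. v \<notin> e}. u \<in> e}"
    using assms(2,3) edge_eq_doubleton[of _ v u] by auto
  then show ?thesis
    unfolding edge_degree_def using assms(1) by simp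
qed

lemma card_missing_colours:
  assumes "finite P" "c ` F \<subseteq> P" "proper_colouring F c"
  shows "card {i\<in>P. missing F c u i} = card P - edge_degree F u" and "edge_degree F u \<le> card P"
proof -
  have inj: "inj_on c {e\<in>F. u \<in> e}"
    unfolding inj_on_def using proper_colouringD[OF assms(3)] by blast
  have im: "c ` {e\<in>F. u \<in> e} \<subseteq> P" using assms(2) by auto
  have "{i\<in>P. missing F c u i} = P - c ` {e\<in>F. u \<in> e}"
    unfolding missing_def by auto
  moreover have "card (c ` {e\<in>F. u \<in> e}) = edge_degree F u"
    unfolding edge_degree_def using card_image[OF inj] .
  ultimately show "card {i\<in>P. missing F c u i} = card P - edge_degree F u"
    and "edge_degree F u \<le> card P"
    using card_Diff_subset[OF finite_subset[OF im assms(1)] im] card_mono[OF assms(1) im] by simp_all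
qed

definition kempe_closed :: "'a set set \<Rightarrow> ('a set \<Rightarrow> nat) \<Rightarrow> nat \<Rightarrow> nat \<Rightarrow> 'a set \<Rightarrow> bool" where
  "kempe_closed F c i j K \<longleftrightarrow> (\<forall>e\<in>F. c e \<in> {i, j} \<longrightarrow> e \<inter> K \<noteq> {} \<longrightarrow> e \<subseteq> K)"

definition kempe_swap :: "('a set \<Rightarrow> nat) \<Rightarrow> nat \<Rightarrow> nat \<Rightarrow> 'a set \<Rightarrow> 'a set \<Rightarrow> nat" where
  "kempe_swap c i j K e = (if c e \<in> {i, j} \<and> e \<subseteq> K then (if c e = i then j else i) else c e)"

lemma kempe_closedD:
  "kempe_closed F c i j K \<Longrightarrow> e \<in> F \<Longrightarrow> c e \<in> {i, j} \<Longrightarrow> x \<in> e \<Longrightarrow> x \<in> K \<Longrightarrow> e \<subseteq> K"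
  unfolding kempe_closed_def by blast

lemma proper_colouring_kempe_swap:
  assumes "proper_colouring F c" "kempe_closed F c i j K" "i \<noteq> j"
  shows "proper_colouring F (kempe_swap c i j K)"
  unfolding proper_colouring_def
proof (intro ballI impI)
  fix e f assume e: "e \<in> F" and f: "f \<in> F" and ef: "e \<noteq> f \<and> e \<inter> f \<noteq> {}"
  have "c e \<noteq> c f"
    using proper_colouringD[OF assms(1) e f] ef by blast
  moreover have "c f \<notin> {i, j}" if "e \<subseteq> K" "\<not> f \<subseteq> K"
  proof
    assume "c f \<in> {i, j}"
    obtain x where "x \<in> e" "x \<in> f"
      using ef by blast
    then show False
      using kempe_closedD[OF assms(2) f \<open>c f \<in> {i, j}\<close>] that by blast
  qed
  moreover have "c e \<notin> {i, j}" if "f \<subseteq> K" "\<not> e \<subseteq> K"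
  proof
    assume "c e \<in> {i, j}"
    obtain x where "x \<in> e" "x \<in> f"
      using ef by blast
    then show False
      using kempe_closedD[OF assms(2) e \<open>c e \<in> {i, j}\<close>] that by blast
  qed
  ultimately show "kempe_swap c i j K e \<noteq> kempe_swap c i j K f"
    using assms(3) unfolding kempe_swap_def
    by (cases "e \<subseteq> K"; cases "f \<subseteq> K") auto
qed

lemma kempe_swap_image_subset:
  "c ` F \<subseteq> P \<Longrightarrow> i \<in> P \<Longrightarrow> j \<in> P \<Longrightarrow> kempe_swap c i j K ` F \<subseteq> P"
  unfolding kempe_swap_def by auto

lemma missing_kempe_swap_inside:
  assumes "kempe_closed F c i j K" "x \<in> K" "i \<noteq> j"
  shows "missing F (kempe_swap c i j K) x j \<longleftrightarrow> missing F c x i"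
  using assms unfolding missing_def kempe_closed_def kempe_swap_def
  by (smt (verit, ccfv_threshold) Int_iff empty_iff insert_iff)

lemma missing_kempe_swap_outside:
  "x \<notin> K \<Longrightarrow> missing F (kempe_swap c i j K) x l \<longleftrightarrow> missing F c x l"
  unfolding missing_def kempe_swap_def by auto

definition kempe_edge :: "'a set set \<Rightarrow> ('a set \<Rightarrow> nat) \<Rightarrow> nat \<Rightarrow> nat \<Rightarrow> 'a \<Rightarrow> 'a \<Rightarrow> bool" where
  "kempe_edge F c i j x y \<longleftrightarrow> {x, y} \<in> F \<and> c {x, y} \<in> {i, j}"

lemma kempe_edge_sym: "kempe_edge F c i j x y \<longleftrightarrow> kempe_edge F c i j y x"
  unfolding kempe_edge_def by (simp add: insert_commute)

lemma kempe_edges_not_missing: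
  assumes "proper_colouring F c" "\<forall>e\<in>F. card e = 2"
    and "kempe_edge F c i j y a" "kempe_edge F c i j y b" "a \<noteq> b"
  shows "\<not> missing F c y i"
proof -
  have "y \<noteq> a"
    using assms(2,3) doubleton_card_2_neq unfolding kempe_edge_def by fastforce
  then have "{y, a} \<noteq> {y, b}"
    using assms(5) by (simp add: doubleton_eq_iff)
  then have "c {y, a} \<noteq> c {y, b}"
    using proper_colouringD[OF assms(1)] assms(3,4) unfolding kempe_edge_def by blast
  then have "c {y, a} = i \<or> c {y, b} = i"
    using assms(3,4) unfolding kempe_edge_def by auto
  then show ?thesis
    using assms(3,4) unfolding kempe_edge_def missing_def by auto
qed

lemma kempe_edges_at_most_two:
  assumes "proper_colouring F c" "\<forall>e\<in>F. card e = 2"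
    and "kempe_edge F c i j y a" "kempe_edge F c i j y b" "kempe_edge F c i j y z"
    and "a \<noteq> b" "a \<noteq> z" "b \<noteq> z"
  shows False
proof -
  have "y \<noteq> a" "y \<noteq> b" "y \<noteq> z"
    using assms(2-5) doubleton_card_2_neq unfolding kempe_edge_def by fastforce+
  then have "{y, a} \<noteq> {y, b}" "{y, a} \<noteq> {y, z}" "{y, b} \<noteq> {y, z}"
    using assms(6-8) by (simp_all add: doubleton_eq_iff)
  then have "c {y, a} \<noteq> c {y, b}" "c {y, a} \<noteq> c {y, z}" "c {y, b} \<noteq> c {y, z}"
    using proper_colouringD[OF assms(1)] assms(3-5) unfolding kempe_edge_def by blast+
  then show False
    using assms(3-5) unfolding kempe_edge_def by auto
qed

text \<open>A maximal \<open>{i, j}\<close>-path starting at a vertex that misses \<open>i\<close> cannot branch: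
  interior vertices already carry both colours, so it is a whole Kempe chain.\<close>
lemma maximal_kempe_path_closed:
  assumes pr: "proper_colouring F c" and c2: "\<forall>e\<in>F. card e = 2"
    and xs: "xs \<noteq> []" "distinct xs" "missing F c (hd xs) i"
    and chain: "\<And>t. Suc t < length xs \<Longrightarrow> kempe_edge F c i j (xs ! t) (xs ! Suc t)"
    and maximal: "\<And>z. kempe_edge F c i j (last xs) z \<Longrightarrow> z \<in> set xs"
    and y: "y \<in> set xs" and yz: "kempe_edge F c i j y z"
  shows "z \<in> set xs"
proof -
  obtain t where t: "t < length xs" "xs ! t = y"
    using y by (metis in_set_conv_nth)
  show ?thesis
  proof (cases "Suc t = length xs")
    case True
    then have "y = last xs"
      using t xs(1) by (metis diff_Suc_1 last_conv_nth)
    then show ?thesis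
      using maximal yz by blast
  next
    case False
    then have st: "Suc t < length xs"
      using t by simp
    define n where "n = xs ! Suc t"
    have yn: "kempe_edge F c i j y n"
      using chain[OF st] t unfolding n_def by simp
    show ?thesis
    proof (cases "z = n")
      case True
      then show ?thesis
        using st n_def by simp
    next
      case zn: False
      show ?thesis
      proof (cases t)
        case 0
        then have "y = hd xs"
          using t xs(1) by (simp add: hd_conv_nth)
        then show ?thesis
          using kempe_edges_not_missing[OF pr c2 yn yz] zn xs(3) by simp
      next
        case (Suc t0)
        define p where "p = xs ! t0"
        have "kempe_edge F c i j p y"
          using chain[of t0] t Suc unfolding p_def by simp
        then have yp: "kempe_edge F c i j y p"
          by (metis kempe_edge_sym)
        have "p \<noteq> n"
          unfolding p_def n_def using xs(2) st Suc by (simp add: nth_eq_iff_index_eq)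
        then have "z = p"
          using kempe_edges_at_most_two[OF pr c2 yp yn yz] zn by blast
        then show ?thesis
          unfolding p_def using Suc t by simp
      qed
    qed
  qed
qed

lemma exists_maximal_kempe_path:
  assumes fin: "finite F" and c2: "\<forall>e\<in>F. card e = 2"
  shows "\<exists>xs. xs \<noteq> [] \<and> hd xs = u \<and> distinct xs \<and>
    (\<forall>t. Suc t < length xs \<longrightarrow> kempe_edge F c i j (xs ! t) (xs ! Suc t)) \<and>
    (\<forall>z. kempe_edge F c i j (last xs) z \<longrightarrow> z \<in> set xs)"
proof -
  define A where "A = insert u (\<Union>F)"
  have "finite A"
    unfolding A_def using finite_Union_edges[OF fin c2] by simp
  define W where "W = {xs. xs \<noteq> [] \<and> hd xs = u \<and> distinct xs \<and> set xs \<subseteq> A \<and>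
      (\<forall>t. Suc t < length xs \<longrightarrow> kempe_edge F c i j (xs ! t) (xs ! Suc t))}"
  have "finite W"
    by (rule finite_subset[OF _ finite_subset_distinct[OF \<open>finite A\<close>]]) (auto simp: W_def)
  moreover have "[u] \<in> W"
    unfolding W_def A_def by auto
  ultimately obtain xs where xsW: "xs \<in> W" and "length xs = Max (length ` W)"
    using Max_in[of "length ` W"] by fastforce
  then have longest: "length ys \<le> length xs" if "ys \<in> W" for ys
    using Max_ge \<open>finite W\<close> that by simp
  have xs: "xs \<noteq> []" "hd xs = u" "distinct xs" "set xs \<subseteq> A"
    and chain: "\<And>t. Suc t < length xs \<Longrightarrow> kempe_edge F c i j (xs ! t) (xs ! Suc t)"
    using xsW unfolding W_def by auto
  have "z \<in> set xs" if last: "kempe_edge F c i j (last xs) z" for z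
  proof (rule ccontr)
    assume z: "z \<notin> set xs"
    have "z \<in> A"
      using last unfolding kempe_edge_def A_def by auto
    have "kempe_edge F c i j ((xs @ [z]) ! t) ((xs @ [z]) ! Suc t)"
      if "Suc t < length (xs @ [z])" for t
    proof (cases "Suc t < length xs")
      case True
      then show ?thesis
        using chain[OF True] by (simp add: nth_append)
    next
      case False
      then have "t = length xs - 1"
        using that by simp
      then show ?thesis
        using last xs(1) by (simp add: nth_append last_conv_nth)
    qed
    then have "xs @ [z] \<in> W"
      using xs z \<open>z \<in> A\<close> unfolding W_def by auto
    then show False
      using longest by fastforce
  qed
  then show ?thesis
    using xs(1-3) chain by blast
qed

lemma kempe_chain:
  assumes fin: "finite F" and c2: "\<forall>e\<in>F. card e = 2" and pr: "proper_colouring F c"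
    and mu: "missing F c u i"
  shows "\<exists>K b. u \<in> K \<and> kempe_closed F c i j K \<and> (\<forall>x\<in>K. missing F c x i \<longrightarrow> x = u \<or> x = b)"
proof -
  obtain xs where xs: "xs \<noteq> []" "hd xs = u" "distinct xs"
    and chain: "\<And>t. Suc t < length xs \<Longrightarrow> kempe_edge F c i j (xs ! t) (xs ! Suc t)"
    and maximal: "\<And>z. kempe_edge F c i j (last xs) z \<Longrightarrow> z \<in> set xs"
    using exists_maximal_kempe_path[OF fin c2] by blast
  have closed: "kempe_closed F c i j (set xs)"
    unfolding kempe_closed_def
  proof (intro ballI impI)
    fix e assume e: "e \<in> F" "c e \<in> {i, j}" "e \<inter> set xs \<noteq> {}"
    obtain a b where ab: "e = {a, b}"
      using c2 e(1) by (meson card_2_iff)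
    then obtain y z where yz: "e = {y, z}" "y \<in> set xs"
      using e(3) by (cases "a \<in> set xs") (auto simp: insert_commute)
    have "kempe_edge F c i j y z"
      using e yz unfolding kempe_edge_def by simp
    then have "z \<in> set xs"
      using maximal_kempe_path_closed[OF pr c2 xs(1,3) _ chain maximal yz(2)] xs(2) mu by simp
    then show "e \<subseteq> set xs"
      using yz by simp
  qed
  have ends: "x = u \<or> x = last xs" if x: "x \<in> set xs" and mx: "missing F c x i" for x
  proof -
    obtain t where t: "t < length xs" "xs ! t = x"
      using x by (metis in_set_conv_nth)
    show ?thesis
    proof (cases "t = 0 \<or> Suc t = length xs")
      case True
      then show ?thesis
        using t xs(1,2) by (metis diff_Suc_1 hd_conv_nth last_conv_nth)
    next
      case False
      then obtain t0 where t0: "t = Suc t0" "Suc t < length xs"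
        using t by (cases t) auto
      have "kempe_edge F c i j (xs ! t0) x" "kempe_edge F c i j x (xs ! Suc t)"
        using chain[of t0] chain[of t] t t0 by auto
      moreover have "xs ! t0 \<noteq> xs ! Suc t"
        using xs(3) t0 by (simp add: nth_eq_iff_index_eq)
      ultimately show ?thesis
        using kempe_edges_not_missing[OF pr c2] mx kempe_edge_sym by metis
    qed
  qed
  show ?thesis
    using closed ends hd_in_set[OF xs(1)] xs(2) by blast
qed

section \<open>Vizing's theorem\<close>

definition is_matching :: "'a set set \<Rightarrow> bool" where
  "is_matching M \<longleftrightarrow> (\<forall>e\<in>M. \<forall>f\<in>M. e \<noteq> f \<longrightarrow> e \<inter> f = {})"

lemma proper_colouring_add_matching:
  assumes "proper_colouring F c" "c ` F \<subseteq> P" "i \<notin> P" "is_matching M"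
  shows "proper_colouring (F \<union> M) (\<lambda>e. if e \<in> M then i else c e)"
  unfolding proper_colouring_def
proof (intro ballI impI)
  fix e f assume e: "e \<in> F \<union> M" and f: "f \<in> F \<union> M" and ef: "e \<noteq> f \<and> e \<inter> f \<noteq> {}"
  consider "e \<in> M" "f \<in> M" | "e \<in> M" "f \<notin> M" | "e \<notin> M" "f \<in> M" | "e \<notin> M" "f \<notin> M"
    by blast
  then show "(if e \<in> M then i else c e) \<noteq> (if f \<in> M then i else c f)"
  proof cases
    case 1
    then show ?thesis
      using assms(4) ef unfolding is_matching_def by blast
  next
    case 2
    then show ?thesis
      using f assms(2,3) by auto
  next
    case 3
    then show ?thesis
      using e assms(2,3) by auto
  next
    case 4
    then show ?thesis
      using e f ef proper_colouringD[OF assms(1)] by auto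
  qed
qed

lemma is_matching_colour_class:
  "proper_colouring F c \<Longrightarrow> is_matching {e\<in>F. c e = i}"
  unfolding is_matching_def using proper_colouringD by blast

lemma card_colour_class_at_vertex:
  assumes "finite F" "proper_colouring F c"
  shows "card {e\<in>{e\<in>F. c e = i}. u \<in> e} = (if missing F c u i then 0 else 1)"
proof (cases "missing F c u i")
  case True
  then have "{e\<in>{e\<in>F. c e = i}. u \<in> e} = {}"
    unfolding missing_def by auto
  then show ?thesis
    using True by (simp only: card.empty if_True)
next
  case False
  then obtain e0 where e0: "e0 \<in> F" "u \<in> e0" "c e0 = i"
    unfolding missing_def by auto
  have "e = e0" if "e \<in> F" "c e = i" "u \<in> e" for e
    using e0 proper_colouringD[OF assms(2) that(1) e0(1)] that by blast
  then have "{e\<in>{e\<in>F. c e = i}. u \<in> e} = {e0}"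
    using e0 by blast
  then show ?thesis
    using False by simp
qed

text \<open>A witness \<open>(c, i, u\<^sub>0)\<close> for extending a colouring of \<open>E - v\<close> to \<open>E\<close>: removing the
  colour class \<open>i\<close> of \<open>c\<close> together with the edge \<open>v u\<^sub>0\<close> lowers the degree of \<open>v\<close> and of
  every other neighbour that sees \<open>i\<close> by one, and leaves at most one neighbour of \<open>v\<close> of the
  new maximal degree \<open>card P - 1\<close>.\<close>
definition extension_witness ::
  "'a set set \<Rightarrow> 'a \<Rightarrow> nat set \<Rightarrow> ('a set \<Rightarrow> nat) \<Rightarrow> nat \<Rightarrow> 'a \<Rightarrow> bool" where
  "extension_witness E v P c i u\<^sub>0 \<longleftrightarrow>
     c ` {e\<in>E. v \<notin> e} \<subseteq> P \<and> proper_colouring {e\<in>E. v \<notin> e} c \<and> i \<in> P \<and> {v, u\<^sub>0} \<in> E \<and>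
     missing {e\<in>E. v \<notin> e} c u\<^sub>0 i \<and>
     (\<forall>u. {v, u} \<in> E \<and> edge_degree E u = card P \<and> missing {e\<in>E. v \<notin> e} c u i \<longrightarrow> u = u\<^sub>0) \<and>
     card {u. {v, u} \<in> E \<and> u \<noteq> u\<^sub>0 \<and>
       (if missing {e\<in>E. v \<notin> e} c u i then card P \<le> edge_degree E u + 1
        else edge_degree E u = card P)} \<le> 1"

lemma card_le_1_if_subset_singleton: "A \<subseteq> {b} \<Longrightarrow> card A \<le> 1"
  using card_mono[of "{b}" A] by simp

lemma extension_witnessI:
  assumes "c ` {e\<in>E. v \<notin> e} \<subseteq> P" "proper_colouring {e\<in>E. v \<notin> e} c" "i \<in> P" "{v, u\<^sub>0} \<in> E"
    "missing {e\<in>E. v \<notin> e} c u\<^sub>0 i"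
    "\<forall>u. {v, u} \<in> E \<and> edge_degree E u = card P \<and> missing {e\<in>E. v \<notin> e} c u i \<longrightarrow> u = u\<^sub>0"
    "{u. {v, u} \<in> E \<and> u \<noteq> u\<^sub>0 \<and>
       (if missing {e\<in>E. v \<notin> e} c u i then card P \<le> edge_degree E u + 1
        else edge_degree E u = card P)} \<subseteq> T"
    "finite T" "card T \<le> 1"
  shows "extension_witness E v P c i u\<^sub>0"
  unfolding extension_witness_def using assms(1-6) le_trans[OF card_mono[OF assms(8,7)] assms(9)]
  by blast

lemma card_missing_colours_at_neighbour:
  assumes "finite P" "finite E" "\<forall>e\<in>E. card e = 2"
    "c ` {e\<in>E. v \<notin> e} \<subseteq> P" "proper_colouring {e\<in>E. v \<notin> e} c" "{v, u} \<in> E"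
  shows "card {i\<in>P. missing {e\<in>E. v \<notin> e} c u i} = card P + 1 - edge_degree E u"
  using edge_degree_delete_vertex[OF assms(2,3,6)] card_missing_colours[OF assms(1,4,5), of u]
  by simp

text \<open>If some colour \<open>j\<close> is seen at every neighbour of \<open>v\<close>, swap \<open>j\<close> with a colour \<open>i\<close>
  missing at \<open>u\<^sub>1\<close> along the Kempe chain through \<open>u\<^sub>1\<close>; afterwards \<open>j\<close> is missing only
  at \<open>u\<^sub>1\<close> and at the other end of that chain.\<close>
lemma extension_witness_by_kempe_swap:
  assumes fin: "finite P" "finite E" and c2: "\<forall>e\<in>E. card e = 2"
    and deg: "\<forall>u. {v, u} \<in> E \<longrightarrow> edge_degree E u \<le> card P"
    and c: "c ` {e\<in>E. v \<notin> e} \<subseteq> P" "proper_colouring {e\<in>E. v \<notin> e} c"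
    and u1: "{v, u\<^sub>1} \<in> E" "\<forall>u. {v, u} \<in> E \<and> edge_degree E u = card P \<longrightarrow> u = u\<^sub>1"
    and j: "j \<in> P" "\<forall>u. {v, u} \<in> E \<longrightarrow> \<not> missing {e\<in>E. v \<notin> e} c u j"
  shows "\<exists>c'. extension_witness E v P c' j u\<^sub>1"
proof -
  let ?F = "{e\<in>E. v \<notin> e}"
  have "card {i\<in>P. missing ?F c u\<^sub>1 i} \<noteq> 0"
    using card_missing_colours_at_neighbour[OF fin c2 c u1(1)] deg[rule_format, OF u1(1)] by simp
  then obtain i where i: "i \<in> P" "missing ?F c u\<^sub>1 i"
    by (metis (no_types, lifting) card.empty empty_Collect_eq)
  have ij: "i \<noteq> j"
    using i(2) j(2) u1(1) by blast
  obtain K b where K: "u\<^sub>1 \<in> K" "kempe_closed ?F c i j K"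
    "\<forall>x\<in>K. missing ?F c x i \<longrightarrow> x = u\<^sub>1 \<or> x = b"
    using kempe_chain[OF _ _ c(2) i(2), of j] fin(2) c2 by auto
  define c' where "c' = kempe_swap c i j K"
  have only: "u = u\<^sub>1 \<or> u = b" if "{v, u} \<in> E" "missing ?F c' u j" for u
  proof (cases "u \<in> K")
    case True
    then show ?thesis
      using that(2) missing_kempe_swap_inside[OF K(2) True ij] K(3) unfolding c'_def by blast
  next
    case False
    then show ?thesis
      using that missing_kempe_swap_outside[OF False] j(2) unfolding c'_def by blast
  qed
  have "extension_witness E v P c' j u\<^sub>1"
  proof (rule extension_witnessI[where T = "{b}"])
    show "c' ` ?F \<subseteq> P" "proper_colouring ?F c'"
      unfolding c'_def using kempe_swap_image_subset[OF c(1) i(1) j(1)]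
        proper_colouring_kempe_swap[OF c(2) K(2) ij] by auto
    show "missing ?F c' u\<^sub>1 j"
      unfolding c'_def using missing_kempe_swap_inside[OF K(2) K(1) ij] i(2) by simp
    show "{u. {v, u} \<in> E \<and> u \<noteq> u\<^sub>1 \<and>
       (if missing ?F c' u j then card P \<le> edge_degree E u + 1 else edge_degree E u = card P)} \<subseteq> {b}"
      using only u1(2) by auto
  qed (use j(1) u1 in auto)
  then show ?thesis by blast
qed

lemma sum_card_Collect_swap:
  assumes "finite A" "finite B"
  shows "(\<Sum>i\<in>B. card {u\<in>A. R u i}) = (\<Sum>u\<in>A. card {i\<in>B. R u i})"
proof -
  have "(\<Sum>i\<in>B. card {u\<in>A. R u i}) = (\<Sum>i\<in>B. \<Sum>u\<in>A. if R u i then 1 else 0)"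
    using assms by (simp add: sum.If_cases Int_def)
  also have "\<dots> = (\<Sum>u\<in>A. \<Sum>i\<in>B. if R u i then 1 else 0)"
    by (rule sum.swap)
  also have "\<dots> = (\<Sum>u\<in>A. card {i\<in>B. R u i})"
    using assms by (simp add: sum.If_cases Int_def)
  finally show ?thesis .
qed

lemma exists_le_of_sum_less:
  fixes f :: "'b \<Rightarrow> nat"
  assumes "(\<Sum>a\<in>A. f a) < card A * Suc n"
  shows "\<exists>a\<in>A. f a \<le> n"
proof (rule ccontr)
  assume "\<not> (\<exists>a\<in>A. f a \<le> n)"
  then have "(\<Sum>a\<in>A. Suc n) \<le> (\<Sum>a\<in>A. f a)"
    by (intro sum_mono) (simp add: not_le Suc_le_eq)
  then show False
    using assms by simp
qed

text \<open>Double counting: a neighbour \<open>u\<close> of \<open>v\<close> with \<open>card P \<le> d(u) + 1\<close> misses one colour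
  if \<open>d(u) = card P\<close> and two colours otherwise.\<close>
lemma sum_card_missing_at_high_neighbours:
  assumes fin: "finite P" "finite E" and c2: "\<forall>e\<in>E. card e = 2"
    and deg: "\<forall>u. {v, u} \<in> E \<longrightarrow> edge_degree E u \<le> card P"
    and c: "c ` {e\<in>E. v \<notin> e} \<subseteq> P" "proper_colouring {e\<in>E. v \<notin> e} c"
    and H: "H = {u. {v, u} \<in> E \<and> card P \<le> edge_degree E u + 1}"
  shows "(\<Sum>i\<in>P. card {u\<in>H. missing {e\<in>E. v \<notin> e} c u i})
    + card {u. {v, u} \<in> E \<and> edge_degree E u = card P} = 2 * card H"
proof -
  let ?S = "{u. {v, u} \<in> E \<and> edge_degree E u = card P}"
  have "finite H"
    unfolding H using finite_Union_edges[OF fin(2) c2] by (rule rev_finite_subset) auto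
  have "?S \<subseteq> H"
    unfolding H by auto
  have "card {i\<in>P. missing {e\<in>E. v \<notin> e} c u i} = (if u \<in> ?S then 1 else 2)" if "u \<in> H" for u
    using card_missing_colours_at_neighbour[OF fin c2 c] deg that unfolding H by auto
  then have "(\<Sum>i\<in>P. card {u\<in>H. missing {e\<in>E. v \<notin> e} c u i}) = (\<Sum>u\<in>H. if u \<in> ?S then 1 else 2)"
    using sum_card_Collect_swap[OF \<open>finite H\<close> fin(1)] by simp
  also have "\<dots> = card ?S + 2 * card (H - ?S)"
    using \<open>finite H\<close> \<open>?S \<subseteq> H\<close> by (simp add: sum.If_cases Int_absorb1 Diff_eq)
  also have "\<dots> = 2 * card H - card ?S"
    using \<open>finite H\<close> \<open>?S \<subseteq> H\<close> card_mono[OF \<open>finite H\<close> \<open>?S \<subseteq> H\<close>]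
    by (simp add: card_Diff_subset finite_subset)
  finally show ?thesis
    using card_mono[OF \<open>finite H\<close> \<open>?S \<subseteq> H\<close>] by simp
qed

lemma sum_card_full_neighbours_seeing:
  assumes fin: "finite P" "finite E" and c2: "\<forall>e\<in>E. card e = 2"
    and c: "c ` {e\<in>E. v \<notin> e} \<subseteq> P" "proper_colouring {e\<in>E. v \<notin> e} c"
    and S: "S = {u. {v, u} \<in> E \<and> edge_degree E u = card P}"
  shows "(\<Sum>i\<in>P. card {u\<in>S. \<not> missing {e\<in>E. v \<notin> e} c u i}) = card S * (card P - 1)"
proof -
  have "finite S"
    unfolding S using finite_Union_edges[OF fin(2) c2] by (rule rev_finite_subset) auto
  have "card {i\<in>P. \<not> missing {e\<in>E. v \<notin> e} c u i} = card P - 1" if "u \<in> S" for u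
  proof -
    have "{i\<in>P. \<not> missing {e\<in>E. v \<notin> e} c u i} = P - {i\<in>P. missing {e\<in>E. v \<notin> e} c u i}"
      by blast
    then show ?thesis
      using card_missing_colours_at_neighbour[OF fin c2 c, of u] that fin(1) unfolding S
      by (simp add: card_Diff_subset)
  qed
  then show ?thesis
    using sum_card_Collect_swap[OF \<open>finite S\<close> fin(1)] by simp
qed

text \<open>Choosing \<open>u\<^sub>0\<close>: the full-degree neighbour missing \<open>i\<close> if there is one, otherwise a
  neighbour of degree at least \<open>card P - 1\<close> missing \<open>i\<close> if there is one.\<close>
lemma extension_witness_of_colour:
  assumes fin: "finite P" "finite E" and c2: "\<forall>e\<in>E. card e = 2"
    and S: "card {u. {v, u} \<in> E \<and> edge_degree E u = card P} \<le> 1"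
    and c: "c ` {e\<in>E. v \<notin> e} \<subseteq> P" "proper_colouring {e\<in>E. v \<notin> e} c"
    and i: "i \<in> P" "\<exists>u. {v, u} \<in> E \<and> missing {e\<in>E. v \<notin> e} c u i"
    and few: "card {u. {v, u} \<in> E \<and> card P \<le> edge_degree E u + 1 \<and> missing {e\<in>E. v \<notin> e} c u i}
      + card {u. {v, u} \<in> E \<and> edge_degree E u = card P \<and> \<not> missing {e\<in>E. v \<notin> e} c u i} \<le> 2"
  shows "\<exists>u\<^sub>0. extension_witness E v P c i u\<^sub>0"
proof -
  let ?F = "{e\<in>E. v \<notin> e}"
  let ?S = "{u. {v, u} \<in> E \<and> edge_degree E u = card P}"
  let ?Y = "{u. {v, u} \<in> E \<and> card P \<le> edge_degree E u + 1 \<and> missing ?F c u i}"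
  let ?T = "{u. {v, u} \<in> E \<and> edge_degree E u = card P \<and> \<not> missing ?F c u i}"
  have finN: "finite {u. {v, u} \<in> E}"
    using finite_Union_edges[OF fin(2) c2] by (rule rev_finite_subset) auto
  then have fin_sets: "finite ?S" "finite ?Y" "finite ?T"
    by (auto intro: rev_finite_subset)
  obtain u\<^sub>0 where u0: "{v, u\<^sub>0} \<in> E" "missing ?F c u\<^sub>0 i" "\<forall>u\<in>?S. missing ?F c u i \<longrightarrow> u = u\<^sub>0"
    "card (?Y - {u\<^sub>0}) + card ?T \<le> 1"
  proof (cases "\<exists>s\<in>?S. missing ?F c s i")
    case True
    then obtain s where s: "s \<in> ?S" "missing ?F c s i"
      by blast
    then have "?S = {s}" "s \<in> ?Y"
      using S fin_sets(1) by (auto simp: card_le_Suc0_iff_eq)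
    moreover have "?T = {}"
    proof (intro equals0I)
      fix u assume "u \<in> ?T"
      then have "u \<in> ?S" "\<not> missing ?F c u i"
        by auto
      then show False
        using \<open>?S = {s}\<close> s(2) by auto
    qed
    have "card (?Y - {s}) \<le> 1"
      using few \<open>s \<in> ?Y\<close> fin_sets(2) by simp
    then have "card (?Y - {s}) + card ?T \<le> 1"
      unfolding \<open>?T = {}\<close> by simp
    moreover have "{v, s} \<in> E" "\<forall>u\<in>?S. missing ?F c u i \<longrightarrow> u = s"
      using s(1) \<open>?S = {s}\<close> by auto
    ultimately show ?thesis
      using that s(2) by blast
  next
    case False
    show ?thesis
    proof (cases "?Y = {}")
      case True
      have "?T \<subseteq> ?S"
        by blast
      then have "card ?T \<le> 1"
        using S card_mono[OF fin_sets(1)] le_trans by blast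
      then have "card (?Y - {u}) + card ?T \<le> 1" for u
        unfolding True by simp
      moreover obtain u where "{v, u} \<in> E" "missing ?F c u i"
        using i(2) by blast
      ultimately show ?thesis
        using that False by blast
    next
      case nonempty: False
      then obtain y where y: "y \<in> ?Y"
        by blast
      then have "card (?Y - {y}) = card ?Y - 1" "card ?Y \<noteq> 0"
        using fin_sets(2) by auto
      then have "card (?Y - {y}) + card ?T \<le> 1"
        using few by linarith
      then show ?thesis
        using that[of y] y False by blast
    qed
  qed
  have "extension_witness E v P c i u\<^sub>0"
  proof (rule extension_witnessI[OF c i(1) u0(1,2), where T = "(?Y - {u\<^sub>0}) \<union> ?T"])
    show "\<forall>u. {v, u} \<in> E \<and> edge_degree E u = card P \<and> missing ?F c u i \<longrightarrow> u = u\<^sub>0"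
      using u0(3) by blast
    show "{u. {v, u} \<in> E \<and> u \<noteq> u\<^sub>0 \<and>
        (if missing ?F c u i then card P \<le> edge_degree E u + 1 else edge_degree E u = card P)}
      \<subseteq> (?Y - {u\<^sub>0}) \<union> ?T"
      by auto
    show "finite ((?Y - {u\<^sub>0}) \<union> ?T)"
      using fin_sets by simp
    show "card ((?Y - {u\<^sub>0}) \<union> ?T) \<le> 1"
      using card_Un_le[of "?Y - {u\<^sub>0}" ?T] u0(4) by linarith
  qed
  then show ?thesis
    by blast
qed

lemma extension_witness_by_counting:
  assumes fin: "finite P" "finite E" and c2: "\<forall>e\<in>E. card e = 2" and "P \<noteq> {}"
    and dv: "edge_degree E v \<le> card P"
    and deg: "\<forall>u. {v, u} \<in> E \<longrightarrow> edge_degree E u \<le> card P"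
    and S: "card {u. {v, u} \<in> E \<and> edge_degree E u = card P} \<le> 1"
    and c: "c ` {e\<in>E. v \<notin> e} \<subseteq> P" "proper_colouring {e\<in>E. v \<notin> e} c"
    and seen: "\<forall>j\<in>P. \<exists>u. {v, u} \<in> E \<and> missing {e\<in>E. v \<notin> e} c u j"
  shows "\<exists>i u\<^sub>0. extension_witness E v P c i u\<^sub>0"
proof -
  let ?F = "{e\<in>E. v \<notin> e}"
  define S where "S = {u. {v, u} \<in> E \<and> edge_degree E u = card P}"
  define H where "H = {u. {v, u} \<in> E \<and> card P \<le> edge_degree E u + 1}"
  define Y where "Y i = {u\<in>H. missing ?F c u i}" for i
  define T where "T i = {u\<in>S. \<not> missing ?F c u i}" for i
  have "H \<subseteq> {u. {v, u} \<in> E}"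
    unfolding H_def by blast
  moreover have "finite {u. {v, u} \<in> E}"
    using finite_Union_edges[OF fin(2) c2] by (rule rev_finite_subset) auto
  ultimately have "card H \<le> card {u. {v, u} \<in> E}"
    by (rule card_mono[rotated])
  then have "card H \<le> card P"
    using edge_degree_eq_card_neighbours[OF c2, of v] dv by simp
  moreover have "(\<Sum>i\<in>P. card (Y i)) + card S = 2 * card H"
    using sum_card_missing_at_high_neighbours[OF fin c2 deg c H_def] unfolding Y_def S_def .
  moreover have "(\<Sum>i\<in>P. card (T i)) = card S * (card P - 1)"
    using sum_card_full_neighbours_seeing[OF fin c2 c S_def] unfolding T_def .
  moreover have "card S = 0 \<or> card S = 1" "card P \<noteq> 0"
    using S \<open>P \<noteq> {}\<close> fin(1) unfolding S_def by auto
  ultimately have "(\<Sum>i\<in>P. card (Y i) + card (T i)) < card P * Suc 2"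
    by (auto simp: sum.distrib)
  then obtain i where i: "i \<in> P" "card (Y i) + card (T i) \<le> 2"
    using exists_le_of_sum_less by blast
  moreover have "Y i = {u. {v, u} \<in> E \<and> card P \<le> edge_degree E u + 1 \<and> missing ?F c u i}"
    "T i = {u. {v, u} \<in> E \<and> edge_degree E u = card P \<and> \<not> missing ?F c u i}"
    unfolding Y_def H_def T_def S_def by auto
  ultimately have "\<exists>u\<^sub>0. extension_witness E v P c i u\<^sub>0"
    using extension_witness_of_colour[OF fin c2 S c i(1)] seen by simp
  then show ?thesis
    by blast
qed

lemma exists_extension_witness:
  assumes "finite P" "finite E" "\<forall>e\<in>E. card e = 2" "edge_degree E v \<noteq> 0"
    "edge_degree E v \<le> card P" "\<forall>u. {v, u} \<in> E \<longrightarrow> edge_degree E u \<le> card P"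
    "card {u. {v, u} \<in> E \<and> edge_degree E u = card P} \<le> 1"
    "c ` {e\<in>E. v \<notin> e} \<subseteq> P" "proper_colouring {e\<in>E. v \<notin> e} c"
  shows "\<exists>c' i u\<^sub>0. extension_witness E v P c' i u\<^sub>0"
proof (cases "\<exists>j\<in>P. \<forall>u. {v, u} \<in> E \<longrightarrow> \<not> missing {e\<in>E. v \<notin> e} c u j")
  case True
  then obtain j where j: "j \<in> P" "\<forall>u. {v, u} \<in> E \<longrightarrow> \<not> missing {e\<in>E. v \<notin> e} c u j"
    by blast
  have "{u. {v, u} \<in> E} \<noteq> {}"
    using assms(4) edge_degree_eq_card_neighbours[OF assms(3), of v] by (metis card.empty)
  then obtain u\<^sub>1 where u1: "{v, u\<^sub>1} \<in> E" "\<forall>u. {v, u} \<in> E \<and> edge_degree E u = card P \<longrightarrow> u = u\<^sub>1"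
    using assms(7) finite_Union_edges[OF assms(2,3)]
    by (smt (verit) One_nat_def card_le_Suc0_iff_eq empty_Collect_eq finite_subset le_numeral_extra(4)
        mem_Collect_eq rev_finite_subset subsetI UnionI insertI1 insert_commute)
  show ?thesis
    using extension_witness_by_kempe_swap[OF assms(1-3,6,8,9) u1 j] by blast
next
  case False
  have "P \<noteq> {}"
    using assms(4,5) by auto
  then show ?thesis
    using extension_witness_by_counting[OF assms(1-3) _ assms(5-9)] False by blast
qed

definition witness_reduction :: "'a set set \<Rightarrow> 'a \<Rightarrow> ('a set \<Rightarrow> nat) \<Rightarrow> nat \<Rightarrow> 'a \<Rightarrow> 'a set set" where
  "witness_reduction E v c i u\<^sub>0 = E - {e\<in>E. v \<notin> e \<and> c e = i} - {{v, u\<^sub>0}}"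

lemma edge_degree_witness_reduction:
  assumes "finite E" "\<forall>e\<in>E. card e = 2" "proper_colouring {e\<in>E. v \<notin> e} c"
    and "{v, u} \<in> E" "u \<noteq> u\<^sub>0"
  shows "edge_degree (witness_reduction E v c i u\<^sub>0) u =
    edge_degree E u - (if missing {e\<in>E. v \<notin> e} c u i then 0 else 1)"
proof -
  let ?I = "{e\<in>{e\<in>E. v \<notin> e}. c e = i}"
  have "u \<noteq> v"
    using assms(2,4) doubleton_card_2_neq by fastforce
  then have "{e\<in>witness_reduction E v c i u\<^sub>0. u \<in> e} = {e\<in>E. u \<in> e} - {e\<in>?I. u \<in> e}"
    using assms(5) unfolding witness_reduction_def by (auto simp: doubleton_eq_iff)
  moreover have "card ({e\<in>E. u \<in> e} - {e\<in>?I. u \<in> e}) = card {e\<in>E. u \<in> e} - card {e\<in>?I. u \<in> e}"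
    using assms(1) by (intro card_Diff_subset) auto
  ultimately show ?thesis
    unfolding edge_degree_def using card_colour_class_at_vertex[OF _ assms(3), of i u] assms(1)
    by (simp only:) simp
qed

lemma edge_colourable_of_witness_reduction:
  assumes w: "extension_witness E v P c i u\<^sub>0"
    and "edge_colourable (witness_reduction E v c i u\<^sub>0) (P - {i})"
  shows "edge_colourable E P"
proof -
  let ?F = "{e\<in>E. v \<notin> e}"
  define M where "M = insert {v, u\<^sub>0} {e\<in>?F. c e = i}"
  obtain d where d: "d ` witness_reduction E v c i u\<^sub>0 \<subseteq> P - {i}"
    "proper_colouring (witness_reduction E v c i u\<^sub>0) d"
    using assms(2) unfolding edge_colourable_def by blast
  have c: "proper_colouring ?F c" "i \<in> P" "{v, u\<^sub>0} \<in> E" "missing ?F c u\<^sub>0 i"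
    using w unfolding extension_witness_def by blast+
  then have "is_matching M"
    using is_matching_colour_class[OF c(1), of i] unfolding M_def is_matching_def missing_def by blast
  then have "proper_colouring (witness_reduction E v c i u\<^sub>0 \<union> M) (\<lambda>e. if e \<in> M then i else d e)"
    using proper_colouring_add_matching[OF d(2,1)] by simp
  moreover have "(\<lambda>e. if e \<in> M then i else d e) ` (witness_reduction E v c i u\<^sub>0 \<union> M) \<subseteq> P"
    using d(1) c(2) by auto
  moreover have "witness_reduction E v c i u\<^sub>0 \<union> M = E"
    unfolding witness_reduction_def M_def using c(3) by auto
  ultimately show ?thesis
    unfolding edge_colourable_def by metis
qed

lemma witness_reduction_hypotheses:
  assumes fin: "finite P" "finite E" and c2: "\<forall>e\<in>E. card e = 2"
    and dv: "edge_degree E v \<le> card P" "edge_degree E v \<noteq> 0"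
    and deg: "\<forall>u. {v, u} \<in> E \<longrightarrow> edge_degree E u \<le> card P"
    and w: "extension_witness E v P c i u\<^sub>0"
    and E': "E' = witness_reduction E v c i u\<^sub>0"
  shows "edge_degree E' v \<le> card (P - {i})"
    and "\<forall>u. {v, u} \<in> E' \<longrightarrow> edge_degree E' u \<le> card (P - {i})"
    and "card {u. {v, u} \<in> E' \<and> edge_degree E' u = card (P - {i})} \<le> 1"
    and "edge_colourable {e\<in>E'. v \<notin> e} (P - {i})"
proof -
  let ?F = "{e\<in>E. v \<notin> e}"
  let ?tight = "\<lambda>u. if missing ?F c u i then card P \<le> edge_degree E u + 1 else edge_degree E u = card P"
  have c: "c ` ?F \<subseteq> P" "proper_colouring ?F c" "i \<in> P" "{v, u\<^sub>0} \<in> E"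
    and full: "\<And>u. {v, u} \<in> E \<Longrightarrow> edge_degree E u = card P \<Longrightarrow> missing ?F c u i \<Longrightarrow> u = u\<^sub>0"
    and few: "card {u. {v, u} \<in> E \<and> u \<noteq> u\<^sub>0 \<and> ?tight u} \<le> 1"
    using w unfolding extension_witness_def by blast+
  have cP: "card (P - {i}) = card P - 1" "1 \<le> card P"
    using c(3) fin(1) dv by auto
  have nbr: "{v, u} \<in> E \<and> u \<noteq> u\<^sub>0" if "{v, u} \<in> E'" for u
    using that unfolding E' witness_reduction_def by (auto simp: doubleton_eq_iff)
  have deg': "edge_degree E' u = edge_degree E u - (if missing ?F c u i then 0 else 1)"
    if "{v, u} \<in> E'" for u
    using edge_degree_witness_reduction[OF fin(2) c2 c(2)] nbr[OF that] unfolding E' by blast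
  have "{e\<in>E'. v \<in> e} = {e\<in>E. v \<in> e} - {{v, u\<^sub>0}}"
    unfolding E' witness_reduction_def by auto
  then have "edge_degree E' v = edge_degree E v - 1"
    unfolding edge_degree_def using c(4) fin(2) by simp
  then show "edge_degree E' v \<le> card (P - {i})"
    using dv cP by simp
  show "\<forall>u. {v, u} \<in> E' \<longrightarrow> edge_degree E' u \<le> card (P - {i})"
  proof (intro allI impI)
    fix u assume u: "{v, u} \<in> E'"
    then have "edge_degree E u \<le> card P" "missing ?F c u i \<longrightarrow> edge_degree E u \<noteq> card P"
      using nbr[OF u] deg full by blast+
    then show "edge_degree E' u \<le> card (P - {i})"
      using deg'[OF u] cP by auto
  qed
  have sub: "{u. {v, u} \<in> E' \<and> edge_degree E' u = card (P - {i})}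
    \<subseteq> {u. {v, u} \<in> E \<and> u \<noteq> u\<^sub>0 \<and> ?tight u}"
  proof (intro subsetI CollectI)
    fix u assume "u \<in> {u. {v, u} \<in> E' \<and> edge_degree E' u = card (P - {i})}"
    then have u: "{v, u} \<in> E'" "edge_degree E' u = card P - 1"
      using cP by auto
    then have "1 \<le> edge_degree E u"
      using edge_degree_delete_vertex[OF fin(2) c2] nbr by fastforce
    then show "{v, u} \<in> E \<and> u \<noteq> u\<^sub>0 \<and> ?tight u"
      using nbr[OF u(1)] deg'[OF u(1)] u(2) cP deg by auto
  qed
  have "finite {u. {v, u} \<in> E \<and> u \<noteq> u\<^sub>0 \<and> ?tight u}"
    using finite_Union_edges[OF fin(2) c2] by (rule rev_finite_subset) auto
  then show "card {u. {v, u} \<in> E' \<and> edge_degree E' u = card (P - {i})} \<le> 1"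
    using card_mono[OF _ sub] few by fastforce
  have "{e\<in>E'. v \<notin> e} = ?F - {e\<in>?F. c e = i}"
    unfolding E' witness_reduction_def by auto
  moreover have "c ` (?F - {e\<in>?F. c e = i}) \<subseteq> P - {i}"
    using c(1) by auto
  moreover have "proper_colouring (?F - {e\<in>?F. c e = i}) c"
    by (rule proper_colouring_subset[OF c(2)]) blast
  ultimately show "edge_colourable {e\<in>E'. v \<notin> e} (P - {i})"
    unfolding edge_colourable_def by (intro exI[of _ c]) simp
qed

text \<open>The lemma of Ehrenfeucht, Faber and Kierstead behind Vizing's theorem.\<close>
lemma edge_colourable_extend_vertex:
  assumes "finite P" "finite E" "\<forall>e\<in>E. card e = 2" "edge_degree E v \<le> card P"
    "\<forall>u. {v, u} \<in> E \<longrightarrow> edge_degree E u \<le> card P"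
    "card {u. {v, u} \<in> E \<and> edge_degree E u = card P} \<le> 1"
    "edge_colourable {e\<in>E. v \<notin> e} P"
  shows "edge_colourable E P"
  using assms
proof (induction "card P" arbitrary: P E rule: less_induct)
  case less
  let ?F = "{e\<in>E. v \<notin> e}"
  obtain c where c: "c ` ?F \<subseteq> P" "proper_colouring ?F c"
    using less.prems(7) unfolding edge_colourable_def by blast
  show ?case
  proof (cases "edge_degree E v = 0")
    case True
    then have "?F = E"
      using less.prems(2) unfolding edge_degree_def by auto
    then show ?thesis
      using less.prems(7) by simp
  next
    case False
    then obtain c' i u\<^sub>0 where w: "extension_witness E v P c' i u\<^sub>0"
      using exists_extension_witness[OF less.prems(1-3) _ less.prems(4-6) c] by blast
    then have "i \<in> P"
      unfolding extension_witness_def by blast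
    then have "card (P - {i}) < card P"
      using less.prems(1) by (rule card_Diff1_less[rotated])
    define E' where "E' = witness_reduction E v c' i u\<^sub>0"
    have "edge_colourable E' (P - {i})"
    proof (rule less.hyps)
      show "finite (P - {i})" "finite E'" "\<forall>e\<in>E'. card e = 2"
        unfolding E'_def witness_reduction_def using less.prems(1-3) by auto
    qed (use \<open>card (P - {i}) < card P\<close>
        witness_reduction_hypotheses[OF less.prems(1-4) False less.prems(5) w E'_def] in auto)
    then show ?thesis
      unfolding E'_def by (rule edge_colourable_of_witness_reduction[OF w])
  qed
qed

theorem vizing:
  assumes "finite P" "finite E" "\<forall>e\<in>E. card e = 2" "\<forall>x. edge_degree E x + 1 \<le> card P"
  shows "edge_colourable E P"
  using assms(2-4)
proof (induction E rule: finite_psubset_induct)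
  case (psubset E)
  show ?case
  proof (cases "E = {}")
    case True
    then show ?thesis
      unfolding edge_colourable_def proper_colouring_def by auto
  next
    case False
    then obtain e where e: "e \<in> E"
      by blast
    then obtain v where v: "v \<in> e"
      using psubset.prems(1) by (metis card_2_iff insertI1)
    let ?F = "{e\<in>E. v \<notin> e}"
    have "?F \<subset> E"
      using e v by auto
    moreover have "\<forall>x. edge_degree ?F x + 1 \<le> card P"
    proof
      fix x
      have "edge_degree ?F x \<le> edge_degree E x"
        by (rule edge_degree_mono[OF psubset.hyps(1)]) blast
      then show "edge_degree ?F x + 1 \<le> card P"
        using psubset.prems(2) by (meson add_le_mono1 le_trans)
    qed
    ultimately have "edge_colourable ?F P"
      using psubset.IH psubset.prems(1) by blast
    moreover have le: "edge_degree E u \<le> card P" and "edge_degree E u \<noteq> card P" for u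
      using psubset.prems(2)[rule_format, of u] by simp_all
    then have no_full: "{u. {v, u} \<in> E \<and> edge_degree E u = card P} = {}"
      by simp
    show ?thesis
    proof (rule edge_colourable_extend_vertex[OF assms(1) psubset.hyps(1) psubset.prems(1) le])
      show "card {u. {v, u} \<in> E \<and> edge_degree E u = card P} \<le> 1"
        unfolding no_full by simp
    qed (use le \<open>edge_colourable ?F P\<close> in auto)
  qed
qed

lemma exists_maximal_matching:
  assumes "finite E" "e\<^sub>0 \<in> E"
  shows "\<exists>M. e\<^sub>0 \<in> M \<and> M \<subseteq> E \<and> is_matching M \<and> (\<forall>e\<in>E - M. \<exists>f\<in>M. e \<inter> f \<noteq> {})"
proof -
  define MS where "MS = {M. M \<subseteq> E \<and> e\<^sub>0 \<in> M \<and> is_matching M}"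
  have "finite MS"
    unfolding MS_def using assms(1) by simp
  moreover have "{e\<^sub>0} \<in> MS"
    unfolding MS_def is_matching_def using assms(2) by auto
  ultimately obtain M where M: "M \<in> MS" and "card M = Max (card ` MS)"
    using Max_in[of "card ` MS"] by fastforce
  then have largest: "card M' \<le> card M" if "M' \<in> MS" for M'
    using Max_ge \<open>finite MS\<close> that by simp
  have "finite M"
    using M assms(1) unfolding MS_def by (auto intro: finite_subset)
  have "\<exists>f\<in>M. e \<inter> f \<noteq> {}" if "e \<in> E - M" for e
  proof (rule ccontr)
    assume "\<not> (\<exists>f\<in>M. e \<inter> f \<noteq> {})"
    then have "insert e M \<in> MS"
      using that M unfolding MS_def is_matching_def by blast
    then show False
      using largest[of "insert e M"] that \<open>finite M\<close> by simp
  qed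
  then show ?thesis
    using M unfolding MS_def by blast
qed

lemma edge_colourable_inside_low_degree:
  assumes "finite P" "1 \<le> card P" "finite E" "\<forall>e\<in>E. card e = 2"
    and low: "\<forall>x\<in>C. edge_degree E x + 1 \<le> card P"
  shows "edge_colourable {e\<in>E. e \<subseteq> C} P"
proof (rule vizing[OF assms(1)])
  have "edge_degree {e\<in>E. e \<subseteq> C} x + 1 \<le> card P" for x
  proof (cases "x \<in> C")
    case True
    then show ?thesis
      using low edge_degree_mono[OF assms(3), of "{e\<in>E. e \<subseteq> C}" x] by force
  next
    case False
    then have "{e\<in>{e\<in>E. e \<subseteq> C}. x \<in> e} = {}"
      by auto
    then show ?thesis
      unfolding edge_degree_def using assms(2) by (simp only: card.empty)
  qed
  then show "\<forall>x. edge_degree {e\<in>E. e \<subseteq> C} x + 1 \<le> card P"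
    by blast
qed (use assms(3,4) in auto)

lemma edge_colourable_inside_low_degree_and_centre:
  assumes finP: "finite P" "1 \<le> card P" and finE: "finite E" and c2: "\<forall>e\<in>E. card e = 2"
    and deg: "\<forall>x. edge_degree E x \<le> card P" and low: "\<forall>x\<in>C. edge_degree E x + 1 \<le> card P"
    and "w \<notin> C"
  shows "edge_colourable {e\<in>E. e \<subseteq> insert w C} P"
proof -
  let ?E = "{e\<in>E. e \<subseteq> insert w C}"
  have fin: "finite ?E" "\<forall>e\<in>?E. card e = 2" and deg': "edge_degree ?E x \<le> edge_degree E x" for x
    using finE c2 edge_degree_mono[OF finE] by auto
  show ?thesis
  proof (rule edge_colourable_extend_vertex[OF finP(1) fin])
    show "edge_degree ?E w \<le> card P" "\<forall>u. {w, u} \<in> ?E \<longrightarrow> edge_degree ?E u \<le> card P"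
      using deg deg' le_trans by blast+
    have "edge_degree ?E u \<noteq> card P" if "{w, u} \<in> ?E" for u
    proof -
      have "u \<noteq> w"
        using that c2 doubleton_card_2_neq by fastforce
      then have "u \<in> C"
        using that by auto
      then show ?thesis
        using low deg'[of u] by fastforce
    qed
    then have no_full: "{u. {w, u} \<in> ?E \<and> edge_degree ?E u = card P} = {}"
      by blast
    show "card {u. {w, u} \<in> ?E \<and> edge_degree ?E u = card P} \<le> 1"
      unfolding no_full by simp
    have "{e\<in>?E. w \<notin> e} = {e\<in>E. e \<subseteq> C}"
      using \<open>w \<notin> C\<close> by auto
    then show "edge_colourable {e\<in>?E. w \<notin> e} P"
      using edge_colourable_inside_low_degree[OF finP finE c2 low] by simp
  qed
qed

text \<open>Starting from the edges inside \<open>C \<union> {w}\<close>, the remaining vertices are added one at a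
  time; their neighbours lie in \<open>C \<union> {w}\<close>, so only \<open>w\<close> can be a neighbour of full degree.\<close>
lemma edge_colourable_if_cover_of_low_degree:
  assumes finP: "finite P" "1 \<le> card P" and finE: "finite E" and c2: "\<forall>e\<in>E. card e = 2"
    and deg: "\<forall>x. edge_degree E x \<le> card P" and low: "\<forall>x\<in>C. edge_degree E x + 1 \<le> card P"
    and cover: "\<forall>e\<in>E. e \<inter> C = {} \<longrightarrow> w \<in> e" and "w \<notin> C"
  shows "edge_colourable E P"
proof -
  define EA where "EA A = {e\<in>E. e \<subseteq> C \<union> {w} \<union> A}" for A
  have finEA: "finite (EA A)" and c2EA: "\<forall>e\<in>EA A. card e = 2" for A
    unfolding EA_def using finE c2 by auto
  have degEA: "edge_degree (EA A) x \<le> edge_degree E x" for A x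
    by (rule edge_degree_mono[OF finE]) (auto simp: EA_def)
  have base: "edge_colourable (EA {}) P"
    using edge_colourable_inside_low_degree_and_centre[OF assms(1-6) \<open>w \<notin> C\<close>] unfolding EA_def
    by simp
  define Y where "Y = \<Union>E - C - {w}"
  have "finite Y"
    unfolding Y_def using finite_Union_edges[OF finE c2] by simp
  have "A \<subseteq> Y \<longrightarrow> edge_colourable (EA A) P" if "finite A" for A
    using that
  proof (induction A rule: finite_induct)
    case empty
    then show ?case
      using base by simp
  next
    case (insert y A)
    show ?case
    proof
      assume sub: "insert y A \<subseteq> Y"
      then have y: "y \<notin> C" "y \<noteq> w"
        unfolding Y_def by auto
      show "edge_colourable (EA (insert y A)) P"
      proof (rule edge_colourable_extend_vertex[OF finP(1) finEA c2EA])
        show "edge_degree (EA (insert y A)) y \<le> card P"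
          "\<forall>u. {y, u} \<in> EA (insert y A) \<longrightarrow> edge_degree (EA (insert y A)) u \<le> card P"
          using deg degEA le_trans by blast+
        have "u = w" if u: "{y, u} \<in> EA (insert y A)" "edge_degree (EA (insert y A)) u = card P" for u
        proof (rule ccontr)
          assume "u \<noteq> w"
          have "{y, u} \<in> E"
            using u(1) unfolding EA_def by simp
          moreover have "u \<notin> C"
            using low degEA[of "insert y A" u] u(2) by fastforce
          moreover have "{y, u} \<inter> C = {}"
            using y(1) \<open>u \<notin> C\<close> by blast
          ultimately have "w \<in> {y, u}"
            using cover by blast
          then show False
            using y(2) \<open>u \<noteq> w\<close> by blast
        qed
        then show "card {u. {y, u} \<in> EA (insert y A) \<and> edge_degree (EA (insert y A)) u = card P} \<le> 1"
          by (intro card_le_1_if_subset_singleton[where b = w]) blast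
        have "{e\<in>EA (insert y A). y \<notin> e} = EA A"
          unfolding EA_def using y insert.hyps(2) by auto
        then show "edge_colourable {e\<in>EA (insert y A). y \<notin> e} P"
          using insert.IH sub by simp
      qed
    qed
  qed
  then have "edge_colourable (EA Y) P"
    using \<open>finite Y\<close> by blast
  moreover have "EA Y = E"
    unfolding EA_def Y_def by auto
  ultimately show ?thesis
    by simp
qed

text \<open>The top colour \<open>D\<close> is spent on a maximal matching \<open>M\<close> of \<open>E - w\<close> through \<open>e\<^sub>0\<close>;
  every vertex covered by \<open>M\<close> then has degree below \<open>D\<close> in \<open>E - M\<close>.\<close>
lemma vizing_top_colour_avoiding:
  assumes finE: "finite E" and c2: "\<forall>e\<in>E. card e = 2" and deg: "\<forall>x. edge_degree E x \<le> D"
    and "1 \<le> D" and e0: "e\<^sub>0 \<in> E" "w \<notin> e\<^sub>0"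
  shows "\<exists>c. c ` E \<subseteq> {..D} \<and> proper_colouring E c \<and> c e\<^sub>0 = D \<and> (\<forall>e\<in>E. w \<in> e \<longrightarrow> c e \<noteq> D)"
proof -
  obtain M where M: "e\<^sub>0 \<in> M" "M \<subseteq> {e\<in>E. w \<notin> e}" "is_matching M"
    and maximal: "\<forall>e\<in>{e\<in>E. w \<notin> e} - M. \<exists>f\<in>M. e \<inter> f \<noteq> {}"
    using exists_maximal_matching[of "{e\<in>E. w \<notin> e}" e\<^sub>0] finE e0 by auto
  define R where "R = E - M"
  have "edge_colourable R {..<D}"
  proof (rule edge_colourable_if_cover_of_low_degree[where C = "\<Union>M" and w = w])
    show "finite R" "\<forall>e\<in>R. card e = 2"
      unfolding R_def using finE c2 by auto
    show "\<forall>x. edge_degree R x \<le> card {..<D}"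
      using deg edge_degree_mono[OF finE, of R] unfolding R_def by (metis Diff_subset card_lessThan le_trans)
    show "\<forall>x\<in>\<Union>M. edge_degree R x + 1 \<le> card {..<D}"
    proof
      fix x assume "x \<in> \<Union>M"
      then obtain f where "f \<in> M" "x \<in> f"
        by blast
      then have "{e\<in>R. x \<in> e} \<subset> {e\<in>E. x \<in> e}"
        using M(2) unfolding R_def by auto
      then have "edge_degree R x < edge_degree E x"
        unfolding edge_degree_def using finE by (simp add: psubset_card_mono)
      then show "edge_degree R x + 1 \<le> card {..<D}"
        using deg[rule_format, of x] by simp
    qed
    show "\<forall>e\<in>R. e \<inter> \<Union>M = {} \<longrightarrow> w \<in> e"
      using maximal unfolding R_def by blast
    show "w \<notin> \<Union>M"
      using M(2) by blast
  qed (use \<open>1 \<le> D\<close> in auto)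
  then obtain d where d: "d ` R \<subseteq> {..<D}" "proper_colouring R d"
    unfolding edge_colourable_def by blast
  define c where "c e = (if e \<in> M then D else d e)" for e
  have "proper_colouring (R \<union> M) c"
    unfolding c_def using proper_colouring_add_matching[OF d(2,1) _ M(3)] by simp
  moreover have "R \<union> M = E"
    unfolding R_def using M(2) by auto
  moreover have "c ` E \<subseteq> {..D}" "c e\<^sub>0 = D" "\<forall>e\<in>E. w \<in> e \<longrightarrow> c e \<noteq> D"
    unfolding c_def using d(1) M(1,2) unfolding R_def by auto
  ultimately show ?thesis
    by auto
qed

section \<open>Walks and arcs of a cycle\<close>

lemma length_walk_edges: "length (walk_edges xs) = length xs - 1"
  by (induction xs rule: walk_edges.induct) auto

lemma nth_walk_edges: "Suc t < length xs \<Longrightarrow> walk_edges xs ! t = {xs ! t, xs ! Suc t}"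
proof (induction xs arbitrary: t rule: walk_edges.induct)
  case (1 x y xs)
  then show ?case
    by (cases t) auto
qed auto

lemma walk_edges_append:
  "xs \<noteq> [] \<Longrightarrow> ys \<noteq> [] \<Longrightarrow> walk_edges (xs @ ys) = walk_edges xs @ {last xs, hd ys} # walk_edges ys"
proof (induction xs)
  case (Cons x xs)
  then show ?case
    by (cases xs; cases ys) auto
qed simp

lemma walk_edges_rev: "walk_edges (rev xs) = rev (walk_edges xs)"
proof (induction xs rule: walk_edges.induct)
  case (1 x y xs)
  have "walk_edges (rev (x # y # xs)) = walk_edges (rev (y # xs)) @ [{y, x}]"
    using walk_edges_append[of "rev (y # xs)" "[x]"] by (simp add: last_rev)
  then show ?case
    using 1 by (simp add: insert_commute)
qed auto

lemma set_walk_edges_subset_iff: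
  "set (walk_edges xs) \<subseteq> E \<longleftrightarrow> (\<forall>t. Suc t < length xs \<longrightarrow> {xs ! t, xs ! Suc t} \<in> E)"
proof
  assume "set (walk_edges xs) \<subseteq> E"
  then show "\<forall>t. Suc t < length xs \<longrightarrow> {xs ! t, xs ! Suc t} \<in> E"
    using nth_mem[of _ "walk_edges xs"] nth_walk_edges length_walk_edges
    by (metis Suc_lessD Suc_less_eq2 diff_Suc_1 subsetD)
next
  assume edges: "\<forall>t. Suc t < length xs \<longrightarrow> {xs ! t, xs ! Suc t} \<in> E"
  show "set (walk_edges xs) \<subseteq> E"
  proof
    fix e assume "e \<in> set (walk_edges xs)"
    then obtain t where "t < length (walk_edges xs)" "e = walk_edges xs ! t"
      by (auto simp: in_set_conv_nth)
    then show "e \<in> E"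
      using edges nth_walk_edges[of t xs] length_walk_edges[of xs] by simp
  qed
qed

lemma is_path_rev: "is_path V E p a b \<Longrightarrow> is_path V E (rev p) b a"
  unfolding is_path_def by (simp add: walk_edges_rev hd_rev last_rev)

lemma rainbow_path_rev: "rainbow_path V E c p a b \<Longrightarrow> rainbow_path V E c (rev p) b a"
  unfolding rainbow_path_def by (simp add: is_path_rev walk_edges_rev rev_map[symmetric])

lemma is_path_append:
  assumes "is_path V E xs a x" "is_path V E ys y b" "{x, y} \<in> E" "set xs \<inter> set ys = {}"
  shows "is_path V E (xs @ ys) a b"
  using assms unfolding is_path_def by (auto simp: walk_edges_append)

lemma not_dvd_strictly_between:
  fixes q x :: nat
  assumes "q < x" "x < 2 * q"
  shows "\<not> q dvd x"
proof
  assume "q dvd x"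
  then obtain k where k: "x = q * k"
    by (auto elim: dvdE)
  then have "1 < k"
    using assms(1) by (metis le_less_linear mult.right_neutral mult_le_mono2 not_less)
  then have "q * 2 \<le> x"
    using k by (metis Suc_leI mult_le_mono2 one_add_one plus_1_eq_Suc)
  then show False
    using assms(2) by simp
qed

lemma arc_residues_differ:
  fixes m q t\<^sub>1 t\<^sub>2 d a :: nat
  assumes m3: "3 \<le> m" and q: "q = (m + 1) div 2" and t: "t\<^sub>1 < t\<^sub>2" "t\<^sub>2 < d" and d: "d \<le> m div 2"
  shows "((a + t\<^sub>1) mod m) mod q \<noteq> ((a + t\<^sub>2) mod m) mod q"
proof
  assume eq: "((a + t\<^sub>1) mod m) mod q = ((a + t\<^sub>2) mod m) mod q"
  define i where "i = (a + t\<^sub>1) mod m"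
  define \<delta> where "\<delta> = t\<^sub>2 - t\<^sub>1"
  have "i < m" "0 < \<delta>" "\<delta> < d" "m div 2 \<le> q" "m \<le> 2 * q"
    unfolding i_def \<delta>_def using m3 t q by auto
  have "a + t\<^sub>2 = (a + t\<^sub>1) + \<delta>"
    unfolding \<delta>_def using t by simp
  then have i2: "(a + t\<^sub>2) mod m = (i + \<delta>) mod m"
    unfolding i_def by (simp only: mod_add_left_eq)
  show False
  proof (cases "i + \<delta> < m")
    case True
    then have "(i + \<delta>) mod q = i mod q"
      using eq i2 unfolding i_def by simp
    then have "q dvd \<delta>"
      using mod_eq_dvd_iff_nat[of i "i + \<delta>" q] by simp
    then show False
      using nat_dvd_not_less[of \<delta> q] \<open>0 < \<delta>\<close> \<open>\<delta> < d\<close> d \<open>m div 2 \<le> q\<close> by simp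
  next
    case False
    moreover have "i + \<delta> - m < m"
      using \<open>i < m\<close> \<open>\<delta> < d\<close> d by simp
    ultimately have "(i + \<delta>) mod m = i + \<delta> - m"
      by (simp add: mod_if)
    then have "(i + \<delta> - m) mod q = i mod q"
      using eq i2 unfolding i_def by simp
    then have "q dvd (m - \<delta>)"
      using mod_eq_dvd_iff_nat[of "i + \<delta> - m" i q] False \<open>\<delta> < d\<close> d by simp
    moreover have "q < m - \<delta>" "m - \<delta> < 2 * q"
      using \<open>0 < \<delta>\<close> \<open>\<delta> < d\<close> d q \<open>m \<le> 2 * q\<close> by auto
    ultimately show False
      using not_dvd_strictly_between by metis
  qed
qed

lemma distinct_arc_residues:
  fixes m q d a :: nat
  assumes "3 \<le> m" "q = (m + 1) div 2" "d \<le> m div 2"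
  shows "distinct (map (\<lambda>t. ((a + t) mod m) mod q) [0..<d])"
proof -
  have "inj_on (\<lambda>t. ((a + t) mod m) mod q) {0..<d}"
  proof (rule inj_onI)
    fix s t assume "s \<in> {0..<d}" "t \<in> {0..<d}" "((a + s) mod m) mod q = ((a + t) mod m) mod q"
    then show "s = t"
      using arc_residues_differ[OF assms(1,2) _ _ assms(3), of s t a]
        arc_residues_differ[OF assms(1,2) _ _ assms(3), of t s a]
      by (cases s t rule: linorder_cases) auto
  qed
  then show ?thesis
    by (simp add: distinct_map)
qed

lemma add_mod_eq_imp_eq:
  fixes t\<^sub>1 t\<^sub>2 m r :: nat
  assumes "t\<^sub>1 < m" "t\<^sub>2 < m" "(t\<^sub>1 + r) mod m = (t\<^sub>2 + r) mod m"
  shows "t\<^sub>1 = t\<^sub>2"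
proof (rule ccontr)
  assume "t\<^sub>1 \<noteq> t\<^sub>2"
  then obtain a b where ab: "a < b" "b < m" "(a + r) mod m = (b + r) mod m"
    using assms by (metis linorder_neqE_nat)
  then have "m dvd b - a"
    using mod_eq_dvd_iff_nat[of "a + r" "b + r" m] by simp
  then show False
    using nat_dvd_not_less[of "b - a" m] ab(1,2) by simp
qed

lemma adjacent_residues_differ:
  fixes m q t :: nat
  assumes m3: "3 \<le> m" and q: "q = (m + 1) div 2" and t: "t < m" "m = 3 \<longrightarrow> t < 2"
  shows "t mod q \<noteq> Suc t mod m mod q"
proof (cases "Suc t < m")
  case True
  have "2 \<le> q"
    using q m3 by simp
  then show ?thesis
    using True by (simp add: mod_Suc)
next
  case False
  then have "Suc t = m" "4 \<le> m"
    using t m3 by auto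
  then have "\<not> q dvd t"
    using q by (intro not_dvd_strictly_between) auto
  then show ?thesis
    using \<open>Suc t = m\<close> by (simp add: dvd_eq_mod_eq_0)
qed

locale cyclic_enumeration =
  fixes m :: nat and cyc :: "nat \<Rightarrow> 'a" and H :: "'a set" and E :: "'a set set" and V :: "'a set"
  assumes m3: "3 \<le> m" and cyc_mod: "\<And>t. cyc (t mod m) = cyc t" and cyc_inj: "inj_on cyc {..<m}"
    and cyc_img: "cyc ` {..<m} = H" and cyc_edge: "\<And>t. {cyc t, cyc (Suc t)} \<in> E" and H_V: "H \<subseteq> V"
begin

definition arc :: "nat \<Rightarrow> nat \<Rightarrow> 'a list" where
  "arc a d = map (\<lambda>t. cyc (a + t)) [0..<Suc d]"

lemma cyc_eq: "cyc x = cyc y \<longleftrightarrow> x mod m = y mod m"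
  using cyc_inj cyc_mod m3 unfolding inj_on_def
  by (metis lessThan_iff mod_less_divisor not_numeral_le_zero not_gr_zero)

lemma cyc_in: "cyc t \<in> H"
  using cyc_img cyc_mod m3 by (metis image_eqI lessThan_iff mod_less_divisor not_numeral_le_zero not_gr_zero)

lemma length_arc: "length (arc a d) = Suc d"
  unfolding arc_def by simp

lemma hd_arc: "hd (arc a d) = cyc a"
  unfolding arc_def by (simp add: upt_conv_Cons del: upt_Suc)

lemma last_arc: "last (arc a d) = cyc (a + d)"
  unfolding arc_def by (simp add: last_map)

lemma set_arc: "set (arc a d) \<subseteq> H"
  unfolding arc_def using cyc_in by auto

lemma distinct_arc:
  assumes "d < m"
  shows "distinct (arc a d)"
  unfolding arc_def distinct_map
proof (intro conjI inj_onI)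
  fix s t assume st: "s \<in> set [0..<Suc d]" "t \<in> set [0..<Suc d]" and "cyc (a + s) = cyc (a + t)"
  moreover have "s < m" "t < m"
    using st assms by auto
  ultimately show "s = t"
    using cyc_eq add_mod_eq_imp_eq[of s m t a] by (simp add: add.commute)
qed simp

lemma walk_edges_arc: "walk_edges (arc a d) = map (\<lambda>t. {cyc (a + t), cyc (Suc (a + t))}) [0..<d]"
  by (rule nth_equalityI) (auto simp: length_walk_edges length_arc nth_walk_edges arc_def nth_map_upt
      simp del: upt_Suc)

lemma arc_path: "d < m \<Longrightarrow> is_path V E (arc a d) (cyc a) (cyc (a + d))"
  unfolding is_path_def walk_edges_arc
  using set_arc H_V cyc_edge hd_arc last_arc distinct_arc by (auto simp: arc_def)

end

section \<open>Colouring the cycle\<close>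

lemma proper_colouring_union_disjoint_colours:
  assumes "proper_colouring F c" "proper_colouring G d" "\<forall>e\<in>F. \<forall>f\<in>G. c e \<noteq> d f"
  shows "proper_colouring (F \<union> G) (\<lambda>e. if e \<in> F then c e else d e)"
  unfolding proper_colouring_def
proof (intro ballI impI)
  fix e f assume e: "e \<in> F \<union> G" and f: "f \<in> F \<union> G" and ef: "e \<noteq> f \<and> e \<inter> f \<noteq> {}"
  consider "e \<in> F" "f \<in> F" | "e \<in> F" "f \<notin> F" | "e \<notin> F" "f \<in> F" | "e \<notin> F" "f \<notin> F"
    by blast
  then show "(if e \<in> F then c e else d e) \<noteq> (if f \<in> F then c f else d f)"
  proof cases
    case 1
    then show ?thesis
      using proper_colouringD[OF assms(1)] ef by simp
  next
    case 2
    then show ?thesis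
      using assms(3) f by simp
  next
    case 3
    then show ?thesis
      using assms(3) e by fastforce
  next
    case 4
    then show ?thesis
      using proper_colouringD[OF assms(2)] e f ef by simp
  qed
qed

context cyclic_enumeration
begin

definition cycle_edge :: "nat \<Rightarrow> 'a set" where
  "cycle_edge t = {cyc t, cyc (Suc t)}"

text \<open>The number of cycle edges coloured \<open>D + 1 + (t mod q)\<close>: all of them, except that the
  closing edge of a triangle would clash with the first one modulo \<open>q = 2\<close>; it is coloured
  together with the edges outside the cycle.\<close>
definition coloured_cycle_edges :: "nat" where
  "coloured_cycle_edges = (if m = 3 then 2 else m)"

lemma cycle_edge_mod: "cycle_edge (t mod m) = cycle_edge t"
  unfolding cycle_edge_def using cyc_mod by (metis mod_Suc_eq)

lemma cycle_edge_subset: "cycle_edge t \<subseteq> H"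
  unfolding cycle_edge_def using cyc_in by simp

lemma cycle_edges_meet:
  assumes "t < m" "s < m" "t \<noteq> s" "cycle_edge t \<inter> cycle_edge s \<noteq> {}"
  shows "t = Suc s mod m \<or> s = Suc t mod m"
proof -
  have "cyc t \<noteq> cyc s"
    using cyc_eq assms(1-3) by simp
  moreover have "Suc t mod m \<noteq> Suc s mod m"
    using add_mod_eq_imp_eq[OF assms(1,2), of 1] assms(3) by auto
  then have "cyc (Suc t) \<noteq> cyc (Suc s)"
    using cyc_eq by simp
  ultimately have "cyc t = cyc (Suc s) \<or> cyc (Suc t) = cyc s"
    using assms(4) unfolding cycle_edge_def by auto
  then show ?thesis
    using cyc_eq assms(1,2) by auto
qed

lemma inj_on_cycle_edge: "inj_on cycle_edge {..<m}"
proof (rule inj_onI)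
  fix t s assume ts: "t \<in> {..<m}" "s \<in> {..<m}" "cycle_edge t = cycle_edge s"
  then have "t mod m = s mod m \<or> t mod m = Suc s mod m \<and> s mod m = Suc t mod m"
    using cyc_eq unfolding cycle_edge_def by (metis doubleton_eq_iff)
  then show "t = s"
  proof
    assume "t mod m = Suc s mod m \<and> s mod m = Suc t mod m"
    then have "t mod m = Suc (Suc t) mod m"
      by (metis mod_Suc_eq)
    then have "m dvd 2"
      using mod_eq_dvd_iff_nat[of t "Suc (Suc t)" m] by simp
    then show "t = s"
      using dvd_imp_le[of m 2] m3 by simp
  qed (use ts in simp)
qed

lemma inj_on_coloured_cycle_edges: "inj_on cycle_edge {..<coloured_cycle_edges}"
  by (rule inj_on_subset[OF inj_on_cycle_edge]) (auto simp: coloured_cycle_edges_def)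

lemma coloured_cycle_edge:
  assumes "4 \<le> m \<or> t mod m < 2"
  shows "t mod m < coloured_cycle_edges" "{cyc t, cyc (Suc t)} = cycle_edge (t mod m)"
  using assms m3 cycle_edge_mod unfolding coloured_cycle_edges_def cycle_edge_def by auto

lemma proper_colouring_cycle_edges:
  assumes q: "q = (m + 1) div 2"
  shows "proper_colouring (cycle_edge ` {..<coloured_cycle_edges})
    (\<lambda>e. D + 1 + the_inv_into {..<coloured_cycle_edges} cycle_edge e mod q)"
  unfolding proper_colouring_def
proof (intro ballI impI)
  let ?n = coloured_cycle_edges
  have "?n \<le> m"
    unfolding coloured_cycle_edges_def by simp
  fix e f assume "e \<in> cycle_edge ` {..<?n}" "f \<in> cycle_edge ` {..<?n}" and ef: "e \<noteq> f \<and> e \<inter> f \<noteq> {}"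
  then obtain t s where ts: "t < ?n" "s < ?n" "e = cycle_edge t" "f = cycle_edge s"
    by blast
  have "t \<noteq> s"
    using ef ts by auto
  then have meet: "t = Suc s mod m \<or> s = Suc t mod m"
    using cycle_edges_meet ts ef \<open>?n \<le> m\<close> by simp
  have adj: "x mod q \<noteq> Suc x mod m mod q" if "x < ?n" for x
  proof (rule adjacent_residues_differ[OF m3 q])
    show "x < m" "m = 3 \<longrightarrow> x < 2"
      using that unfolding coloured_cycle_edges_def by (auto split: if_splits)
  qed
  have "t mod q \<noteq> s mod q"
    using meet adj ts(1,2) by metis
  then show "D + 1 + the_inv_into {..<?n} cycle_edge e mod q \<noteq>
      D + 1 + the_inv_into {..<?n} cycle_edge f mod q"
    using ts the_inv_into_f_f[OF inj_on_coloured_cycle_edges] by auto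
qed

lemma exists_cycle_colouring:
  assumes finE: "finite E" and c2: "\<forall>e\<in>E. card e = 2" and deg: "\<forall>x. edge_degree E x \<le> D"
    and "1 \<le> D" and e0: "e\<^sub>0 \<in> E" "\<not> e\<^sub>0 \<subseteq> H" "w \<notin> e\<^sub>0" and "w \<notin> H"
    and q: "q = (m + 1) div 2"
  shows "\<exists>c. c ` E \<subseteq> {..<D + 1 + q} \<and> proper_colouring E c \<and> c e\<^sub>0 = D \<and>
    (\<forall>e\<in>E. w \<in> e \<longrightarrow> c e < D) \<and>
    (\<forall>t. 4 \<le> m \<or> t mod m < 2 \<longrightarrow> c {cyc t, cyc (Suc t)} = D + 1 + t mod m mod q)"
proof -
  let ?n = coloured_cycle_edges
  let ?C = "cycle_edge ` {..<?n}"
  let ?cC = "\<lambda>e. D + 1 + the_inv_into {..<?n} cycle_edge e mod q"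
  have "?C \<subseteq> E"
    using cyc_edge unfolding cycle_edge_def by blast
  have "?C \<subseteq> Pow H"
    using cycle_edge_subset by blast
  define G where "G = E - ?C"
  obtain c\<^sub>0 where c0: "c\<^sub>0 ` G \<subseteq> {..D}" "proper_colouring G c\<^sub>0" "c\<^sub>0 e\<^sub>0 = D"
    "\<forall>e\<in>G. w \<in> e \<longrightarrow> c\<^sub>0 e \<noteq> D"
  proof -
    have "\<forall>x. edge_degree G x \<le> D"
      using deg edge_degree_mono[OF finE, of G] unfolding G_def by (metis Diff_subset le_trans)
    moreover have "e\<^sub>0 \<in> G"
      unfolding G_def using e0(1,2) \<open>?C \<subseteq> Pow H\<close> by blast
    ultimately show ?thesis
      using vizing_top_colour_avoiding[of G D e\<^sub>0 w] that finE c2 \<open>1 \<le> D\<close> e0(3)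
      unfolding G_def by auto
  qed
  define c where "c e = (if e \<in> ?C then ?cC e else c\<^sub>0 e)" for e
  have "proper_colouring (?C \<union> G) c"
    unfolding c_def
  proof (rule proper_colouring_union_disjoint_colours[OF proper_colouring_cycle_edges[OF q] c0(2)])
    show "\<forall>e\<in>?C. \<forall>f\<in>G. ?cC e \<noteq> c\<^sub>0 f"
      using c0(1) by fastforce
  qed
  moreover have "?C \<union> G = E"
    unfolding G_def using \<open>?C \<subseteq> E\<close> by blast
  moreover have "0 < q"
    using q m3 by simp
  then have "c ` E \<subseteq> {..<D + 1 + q}"
    unfolding c_def G_def using c0(1) by (force simp: G_def)
  moreover have "c e\<^sub>0 = D"
    unfolding c_def using c0(3) e0(2) \<open>?C \<subseteq> Pow H\<close> by auto
  moreover have "c e < D" if "e \<in> E" "w \<in> e" for e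
  proof -
    have "e \<notin> ?C"
      using that(2) \<open>w \<notin> H\<close> \<open>?C \<subseteq> Pow H\<close> by blast
    then have "e \<in> G"
      unfolding G_def using that(1) by blast
    then have "c\<^sub>0 e \<le> D" "c\<^sub>0 e \<noteq> D"
      using c0(1,4) that(2) by auto
    then show ?thesis
      unfolding c_def using \<open>e \<notin> ?C\<close> by simp
  qed
  moreover have "c {cyc t, cyc (Suc t)} = D + 1 + t mod m mod q" if "4 \<le> m \<or> t mod m < 2" for t
    unfolding c_def using coloured_cycle_edge[OF that] the_inv_into_f_f[OF inj_on_coloured_cycle_edges]
    by fastforce
  ultimately show ?thesis
    by metis
qed

end

section \<open>Rainbow paths\<close>

locale rainbow_setting = cyclic_enumeration m cyc H E V for m cyc H E V +
  fixes w :: 'a and N :: "'a set" and u :: 'a and D :: nat and c :: "'a set \<Rightarrow> nat" and q :: nat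
  assumes V_eq: "V = insert w N \<union> H" and w_notin: "w \<notin> N" "w \<notin> H" and N_H: "N \<inter> H = {}"
    and star: "\<forall>x\<in>N. {w, x} \<in> E" and u: "u \<in> N" and bridge: "{u, cyc 0} \<in> E"
    and proper: "proper_colouring E c" and c_bridge: "c {u, cyc 0} = D"
    and c_star: "\<forall>x\<in>N. c {w, x} < D"
    and c_cycle: "\<And>t. 4 \<le> m \<or> t mod m < 2 \<Longrightarrow> c {cyc t, cyc (Suc t)} = D + 1 + t mod m mod q"
    and q: "q = (m + 1) div 2"
begin

lemma map_colour_walk_edges_arc:
  "map c (walk_edges (arc a d)) = map (\<lambda>t. c {cyc (a + t), cyc (Suc (a + t))}) [0..<d]"
  unfolding walk_edges_arc by simp

lemma short_arc_rainbow:
  assumes "d \<le> m div 2"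
  shows "distinct (map c (walk_edges (arc a d)))"
proof (cases "4 \<le> m")
  case True
  then have eq: "map c (walk_edges (arc a d)) = map ((+) (D + 1)) (map (\<lambda>t. (a + t) mod m mod q) [0..<d])"
    unfolding map_colour_walk_edges_arc using c_cycle by simp
  have "distinct (map ((+) (D + 1)) (map (\<lambda>t. (a + t) mod m mod q) [0..<d]))"
    using distinct_arc_residues[OF m3 q assms, of a] unfolding distinct_map[of "(+) (D + 1)"]
    by (simp add: inj_on_def)
  then show ?thesis
    by (simp only: eq)
next
  case False
  then have "length (walk_edges (arc a d)) \<le> 1"
    using assms m3 length_walk_edges[of "arc a d"] length_arc by simp
  then show ?thesis
    by (cases "walk_edges (arc a d)") auto
qed

lemma rainbow_path_on_cycle:
  assumes "i < m" "j < m" "i \<noteq> j"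
  shows "\<exists>P. rainbow_path V E c P (cyc i) (cyc j)"
proof -
  have ordered: "\<exists>P. rainbow_path V E c P (cyc a) (cyc b)" if ab: "a < b" "b < m" for a b
  proof (cases "b - a \<le> m div 2")
    case True
    then have "rainbow_path V E c (arc a (b - a)) (cyc a) (cyc b)"
      using arc_path[of "b - a" a] ab short_arc_rainbow unfolding rainbow_path_def by simp
    then show ?thesis
      by blast
  next
    case False
    define d where "d = m - (b - a)"
    have d: "d \<le> m div 2" "d < m"
      unfolding d_def using False ab by auto
    have "cyc (b + d) = cyc a"
      using cyc_eq ab unfolding d_def by simp
    then have "rainbow_path V E c (arc b d) (cyc b) (cyc a)"
      using arc_path[OF d(2), of b] short_arc_rainbow[OF d(1)] unfolding rainbow_path_def by simp
    then have "rainbow_path V E c (rev (arc b d)) (cyc a) (cyc b)"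
      by (rule rainbow_path_rev)
    then show ?thesis
      by blast
  qed
  consider "i < j" | "j < i"
    using assms(3) by linarith
  then show ?thesis
  proof cases
    case 1
    then show ?thesis
      using ordered assms(2) by blast
  next
    case 2
    then obtain P where "rainbow_path V E c P (cyc j) (cyc i)"
      using ordered assms(1) by blast
    then have "rainbow_path V E c (rev P) (cyc i) (cyc j)"
      by (rule rainbow_path_rev)
    then show ?thesis
      by blast
  qed
qed

lemma rainbow_arc_from_start:
  assumes "b < m"
  shows "\<exists>L. is_path V E L (cyc 0) (cyc b) \<and> set L \<subseteq> H \<and> distinct (map c (walk_edges L)) \<and>
    (\<forall>e\<in>set (walk_edges L). D < c e)"
proof (cases "4 \<le> m")
  case m4: True
  have high: "\<forall>e\<in>set (walk_edges (arc a d)). D < c e" for a d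
    unfolding walk_edges_arc using c_cycle m4 by auto
  show ?thesis
  proof (cases "b \<le> m div 2")
    case True
    then show ?thesis
      using arc_path[of b 0] assms short_arc_rainbow[OF True, of 0] high[of 0 b] set_arc[of 0 b]
      by auto
  next
    case False
    have d: "m - b \<le> m div 2" "m - b < m"
      using False assms by auto
    have "cyc (b + (m - b)) = cyc 0"
      using assms cyc_eq by simp
    then have "is_path V E (rev (arc b (m - b))) (cyc 0) (cyc b)"
      using arc_path[OF d(2), of b] is_path_rev by fastforce
    moreover have "distinct (map c (walk_edges (rev (arc b (m - b)))))"
      using short_arc_rainbow[OF d(1), of b] by (simp add: walk_edges_rev rev_map[symmetric])
    ultimately show ?thesis
      using high[of b "m - b"] set_arc[of b "m - b"]
      by (intro exI[of _ "rev (arc b (m - b))"]) (simp add: walk_edges_rev)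
  qed
next
  case False
  then have "m = 3" "q = 2"
    using m3 q by auto
  have "c {cyc t, cyc (Suc t)} = D + 1 + t" if "t < b" for t
    using c_cycle[of t] that assms \<open>m = 3\<close> \<open>q = 2\<close> by simp
  then have eq: "map c (walk_edges (arc 0 b)) = map ((+) (D + 1)) [0..<b]"
    unfolding map_colour_walk_edges_arc by simp
  have "distinct (map c (walk_edges (arc 0 b)))"
    unfolding eq by (simp add: distinct_map)
  moreover have "D < c e" if "e \<in> set (walk_edges (arc 0 b))" for e
  proof -
    have "c e \<in> set (map c (walk_edges (arc 0 b)))"
      using that by simp
    then show ?thesis
      unfolding eq by auto
  qed
  ultimately show ?thesis
    using arc_path[of b 0] assms set_arc[of 0 b] by (intro exI[of _ "arc 0 b"]) simp
qed

lemma edge_in_star: "x \<in> N \<Longrightarrow> {x, w} \<in> E"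
  using star by (metis insert_commute)

lemma colour_in_star: "x \<in> N \<Longrightarrow> c {x, w} < D"
  using c_star by (metis insert_commute)

lemma two_star_edges_colours_differ:
  assumes "x \<in> N" "y \<in> N" "x \<noteq> y"
  shows "c {x, w} \<noteq> c {w, y}"
proof -
  have "{x, w} \<noteq> {w, y}"
    using assms(3) w_notin(1) assms(1) by (auto simp: doubleton_eq_iff)
  then show ?thesis
    using proper_colouringD[OF proper edge_in_star[OF assms(1)]] star assms(2) by simp
qed

lemma star_path_to_bridge:
  assumes "x \<in> insert w N"
  shows "\<exists>P. is_path V E P x u \<and> set P \<inter> H = {} \<and> distinct (map c (walk_edges P)) \<and>
    (\<forall>e\<in>set (walk_edges P). c e < D)"
proof -
  have V: "w \<in> V" "u \<in> V" "N \<subseteq> V" and "u \<noteq> w" "u \<notin> H"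
    using V_eq u w_notin N_H by auto
  consider "x = u" | "x = w" | "x \<in> N" "x \<noteq> u"
    using assms by blast
  then show ?thesis
  proof cases
    case 1
    then show ?thesis
      using V \<open>u \<notin> H\<close> by (intro exI[of _ "[u]"]) (simp add: is_path_def)
  next
    case 2
    then show ?thesis
      using V \<open>u \<noteq> w\<close> \<open>u \<notin> H\<close> w_notin star u c_star
      by (intro exI[of _ "[w, u]"]) (simp add: is_path_def)
  next
    case 3
    then have "x \<noteq> w" "x \<notin> H"
      using w_notin N_H by auto
    moreover have "{x, w} \<in> E" "{w, u} \<in> E" "c {x, w} < D" "c {w, u} < D" "c {x, w} \<noteq> c {w, u}"
      using 3 star u c_star edge_in_star colour_in_star two_star_edges_colours_differ by auto
    ultimately show ?thesis
      using 3 V \<open>u \<noteq> w\<close> \<open>u \<notin> H\<close> w_notin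
      by (intro exI[of _ "[x, w, u]"]) (simp add: is_path_def subset_iff)
  qed
qed

lemma rainbow_path_to_cycle:
  assumes "x \<in> insert w N" "b < m"
  shows "\<exists>P. rainbow_path V E c P x (cyc b)"
proof -
  obtain P where P: "is_path V E P x u" "set P \<inter> H = {}" "distinct (map c (walk_edges P))"
    "\<forall>e\<in>set (walk_edges P). c e < D"
    using star_path_to_bridge[OF assms(1)] by blast
  obtain L where L: "is_path V E L (cyc 0) (cyc b)" "set L \<subseteq> H" "distinct (map c (walk_edges L))"
    "\<forall>e\<in>set (walk_edges L). D < c e"
    using rainbow_arc_from_start[OF assms(2)] by blast
  have "P \<noteq> []" "L \<noteq> []" "last P = u" "hd L = cyc 0"
    using P(1) L(1) unfolding is_path_def by auto
  then have "walk_edges (P @ L) = walk_edges P @ {u, cyc 0} # walk_edges L"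
    using walk_edges_append[of P L] by simp
  then have "map c (walk_edges (P @ L)) = map c (walk_edges P) @ D # map c (walk_edges L)"
    using c_bridge by simp
  moreover have "set (map c (walk_edges P)) \<subseteq> {..<D}" "set (map c (walk_edges L)) \<subseteq> {D<..}"
    using P(4) L(4) by auto
  ultimately have "distinct (map c (walk_edges (P @ L)))"
    using P(3) L(3) by fastforce
  moreover have "is_path V E (P @ L) x (cyc b)"
    using is_path_append[OF P(1) L(1) bridge] P(2) L(2) by blast
  ultimately show ?thesis
    unfolding rainbow_path_def by blast
qed

lemma rainbow_path_in_star:
  assumes "x \<in> insert w N" "y \<in> insert w N" "x \<noteq> y"
  shows "\<exists>P. rainbow_path V E c P x y"
proof -
  have V: "w \<in> V" "N \<subseteq> V"
    using V_eq by auto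
  consider "x = w" | "y = w" | "x \<in> N" "y \<in> N"
    using assms by blast
  then show ?thesis
  proof cases
    case 1
    then show ?thesis
      using assms V star by (intro exI[of _ "[w, y]"]) (auto simp: rainbow_path_def is_path_def)
  next
    case 2
    then show ?thesis
      using assms V edge_in_star by (intro exI[of _ "[x, w]"]) (auto simp: rainbow_path_def is_path_def)
  next
    case 3
    then show ?thesis
      using assms V star edge_in_star two_star_edges_colours_differ w_notin(1)
      by (intro exI[of _ "[x, w, y]"]) (auto simp: rainbow_path_def is_path_def)
  qed
qed

theorem rainbow_connected: "rainbow_connected V E c"
  unfolding rainbow_connected_def
proof (intro ballI impI)
  fix x y assume "x \<in> V" "y \<in> V" "x \<noteq> y"
  have on_cycle: "\<exists>i<m. z = cyc i" if "z \<in> H" for z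
    using that cyc_img by auto
  consider "x \<in> H" "y \<in> H" | "x \<notin> H" "y \<in> H" | "x \<in> H" "y \<notin> H" | "x \<notin> H" "y \<notin> H"
    by blast
  then show "\<exists>P. rainbow_path V E c P x y"
  proof cases
    case 1
    then obtain i j where "i < m" "j < m" "x = cyc i" "y = cyc j"
      using on_cycle by blast
    then show ?thesis
      using rainbow_path_on_cycle \<open>x \<noteq> y\<close> by blast
  next
    case 2
    moreover obtain j where "j < m" "y = cyc j"
      using on_cycle 2 by blast
    ultimately show ?thesis
      using rainbow_path_to_cycle[of x j] \<open>x \<in> V\<close> V_eq by blast
  next
    case 3
    moreover obtain i where "i < m" "x = cyc i"
      using on_cycle 3 by blast
    ultimately obtain P where "rainbow_path V E c P y x"
      using rainbow_path_to_cycle[of y i] \<open>y \<in> V\<close> V_eq by blast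
    then have "rainbow_path V E c (rev P) x y"
      by (rule rainbow_path_rev)
    then show ?thesis
      by blast
  next
    case 4
    then show ?thesis
      using rainbow_path_in_star \<open>x \<in> V\<close> \<open>y \<in> V\<close> \<open>x \<noteq> y\<close> V_eq by blast
  qed
qed

end

section \<open>Graphs with a Hamiltonian cycle outside a closed neighbourhood\<close>

lemma simple_graph_finite_edges: "simple_graph V E \<Longrightarrow> finite E"
  unfolding simple_graph_def by (meson Pow_iff finite_Pow_iff rev_finite_subset subsetI)

lemma neighbours_simple_graph:
  "simple_graph V E \<Longrightarrow> neighbours V E x = {u. {x, u} \<in> E}"
  unfolding simple_graph_def neighbours_def by (auto simp: insert_commute)

lemma degree_eq_edge_degree: "simple_graph V E \<Longrightarrow> degree V E x = edge_degree E x"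
  unfolding degree_def using neighbours_simple_graph edge_degree_eq_card_neighbours
  by (metis simple_graph_def)

lemma edge_degree_le_max_degree:
  assumes "simple_graph V E"
  shows "edge_degree E x \<le> max_degree V E"
proof (cases "x \<in> V")
  case True
  then show ?thesis
    using assms degree_eq_edge_degree[OF assms, of x] unfolding max_degree_def simple_graph_def
    by (metis Max_ge finite_imageI imageI)
next
  case False
  then have no_edges: "{e\<in>E. x \<in> e} = {}"
    using assms unfolding simple_graph_def by auto
  show ?thesis
    unfolding edge_degree_def no_edges by simp
qed

lemma self_notin_neighbours: "simple_graph V E \<Longrightarrow> w \<notin> neighbours V E w"
  unfolding simple_graph_def neighbours_def by force

lemma closed_nbhd_partition:
  assumes "simple_graph V E" "w \<in> V"
  shows "V = insert w (neighbours V E w) \<union> (V - closed_nbhd V E w)" "w \<notin> neighbours V E w"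
    "w \<notin> V - closed_nbhd V E w" "neighbours V E w \<inter> (V - closed_nbhd V E w) = {}"
    "\<forall>x\<in>neighbours V E w. {w, x} \<in> E"
  using assms self_notin_neighbours[OF assms(1)] neighbours_simple_graph[OF assms(1)]
  unfolding closed_nbhd_def neighbours_def by auto

lemma card_eq_degree_plus_outside:
  assumes "simple_graph V E" "w \<in> V"
  shows "card V = Suc (degree V E w) + card (V - closed_nbhd V E w)"
proof -
  have "finite V" "closed_nbhd V E w \<subseteq> V"
    using assms unfolding simple_graph_def closed_nbhd_def neighbours_def by auto
  then have "card V = card (closed_nbhd V E w) + card (V - closed_nbhd V E w)"
    using card_Diff_subset[OF finite_subset] card_mono by fastforce
  moreover have "finite (neighbours V E w)"
    using \<open>finite V\<close> unfolding neighbours_def by simp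
  ultimately show ?thesis
    unfolding closed_nbhd_def degree_def using self_notin_neighbours[OF assms(1)] by simp
qed

lemma list_crosses_set:
  "xs \<noteq> [] \<Longrightarrow> hd xs \<in> A \<Longrightarrow> last xs \<notin> A \<Longrightarrow> \<exists>i. Suc i < length xs \<and> xs ! i \<in> A \<and> xs ! Suc i \<notin> A"
proof (induction xs)
  case (Cons a xs)
  show ?case
  proof (cases "xs \<noteq> [] \<and> hd xs \<in> A")
    case True
    then obtain i where "Suc i < length xs" "xs ! i \<in> A" "xs ! Suc i \<notin> A"
      using Cons by auto
    then show ?thesis
      by (intro exI[of _ "Suc i"]) simp
  next
    case False
    have "xs \<noteq> []"
      using Cons.prems by auto
    then have "hd xs \<notin> A"
      using False by simp
    then show ?thesis
      using Cons.prems \<open>xs \<noteq> []\<close> by (intro exI[of _ 0]) (simp add: hd_conv_nth)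
  qed
qed simp

lemma crossing_edge:
  assumes "simple_graph V E" "connected_graph V E" "w \<in> V" "V - closed_nbhd V E w \<noteq> {}"
  shows "\<exists>u v. u \<in> neighbours V E w \<and> v \<in> V - closed_nbhd V E w \<and> {u, v} \<in> E"
proof -
  obtain h where "h \<in> V - closed_nbhd V E w"
    using assms(4) by blast
  then obtain p where p: "is_path V E p w h"
    using assms(2,3) unfolding connected_graph_def by blast
  then obtain i where i: "Suc i < length p" "p ! i \<in> closed_nbhd V E w" "p ! Suc i \<notin> closed_nbhd V E w"
    using list_crosses_set[of p "closed_nbhd V E w"] \<open>h \<in> V - closed_nbhd V E w\<close>
    unfolding is_path_def closed_nbhd_def by auto
  have edge: "{p ! i, p ! Suc i} \<in> E" and "p ! Suc i \<in> V"
    using p i(1) set_walk_edges_subset_iff[of p E] nth_mem[of "Suc i" p] unfolding is_path_def by auto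
  moreover have "p ! i \<noteq> w"
    using edge i(3) neighbours_simple_graph[OF assms(1)] unfolding closed_nbhd_def by auto
  ultimately show ?thesis
    using i(2,3) unfolding closed_nbhd_def by blast
qed

lemma hamiltonian_cyclic_enumeration:
  assumes "hamiltonian H E\<^sub>H" "E\<^sub>H \<subseteq> E" "H \<subseteq> V" "v\<^sub>0 \<in> H"
  shows "\<exists>cyc. cyclic_enumeration (card H) cyc H E V \<and> cyc 0 = v\<^sub>0"
proof -
  obtain p where p: "distinct p" "set p = H" "3 \<le> length p" "set (walk_edges p) \<subseteq> E"
    "{last p, hd p} \<in> E"
    using assms(1,2) unfolding hamiltonian_def by blast
  define m where "m = length p"
  have "card H = m" "0 < m"
    unfolding m_def using distinct_card[OF p(1)] p(2,3) by auto
  obtain r where r: "r < m" "p ! r = v\<^sub>0"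
    using assms(4) p(2) unfolding m_def by (metis in_set_conv_nth)
  define cyc where "cyc t = p ! ((t + r) mod m)" for t
  have edge: "{p ! j, p ! (Suc j mod m)} \<in> E" if "j < m" for j
  proof (cases "Suc j < m")
    case True
    then show ?thesis
      using p(4) set_walk_edges_subset_iff[of p E] unfolding m_def by simp
  next
    case False
    then have "Suc j = m"
      using that by simp
    then have "j = length p - 1" "p \<noteq> []"
      unfolding m_def by auto
    then have "last p = p ! j" "hd p = p ! 0"
      by (simp_all add: last_conv_nth hd_conv_nth)
    then show ?thesis
      using p(5) \<open>Suc j = m\<close> by (simp add: insert_commute)
  qed
  have "cyclic_enumeration m cyc H E V"
  proof
    show "3 \<le> m"
      unfolding m_def by (rule p(3))
    show "cyc (t mod m) = cyc t" for t
      unfolding cyc_def by (simp add: mod_add_left_eq)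
    show "inj_on cyc {..<m}"
    proof (rule inj_onI)
      fix x y assume "x \<in> {..<m}" "y \<in> {..<m}" "cyc x = cyc y"
      then show "x = y"
        using add_mod_eq_imp_eq[of x m y r] p(1) \<open>0 < m\<close> unfolding cyc_def m_def
        by (simp add: nth_eq_iff_index_eq)
    qed
    show "cyc ` {..<m} = H"
    proof
      show "cyc ` {..<m} \<subseteq> H"
        unfolding cyc_def using p(2) \<open>0 < m\<close> unfolding m_def by auto
      show "H \<subseteq> cyc ` {..<m}"
      proof
        fix h assume "h \<in> H"
        then obtain j where j: "j < m" "p ! j = h"
          using p(2) unfolding m_def by (metis in_set_conv_nth)
        have "((j + m - r) mod m + r) mod m = j"
          using j(1) r(1) by (simp add: mod_add_left_eq)
        then have "cyc ((j + m - r) mod m) = h"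
          unfolding cyc_def using j(2) by simp
        then show "h \<in> cyc ` {..<m}"
          using \<open>0 < m\<close> by (metis image_eqI lessThan_iff mod_less_divisor)
      qed
    qed
    show "{cyc t, cyc (Suc t)} \<in> E" for t
      unfolding cyc_def using edge[of "(t + r) mod m"] \<open>0 < m\<close> by (simp add: mod_Suc_eq)
    show "H \<subseteq> V"
      by (rule assms(3))
  qed
  moreover have "cyc 0 = v\<^sub>0"
    unfolding cyc_def using r by simp
  ultimately show ?thesis
    using \<open>card H = m\<close> by blast
qed

lemma prc_le:
  "c ` E \<subseteq> {..<k} \<Longrightarrow> proper_colouring E c \<Longrightarrow> rainbow_connected V E c \<Longrightarrow> prc V E \<le> k"
  unfolding prc_def by (intro Least_le) blast

lemma (in cyclic_enumeration) prc_le_star_bridge_cycle: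
  assumes "finite E" "\<forall>e\<in>E. card e = 2" "\<forall>x. edge_degree E x \<le> D"
    and "V = insert w N \<union> H" "w \<notin> N" "w \<notin> H" "N \<inter> H = {}" "\<forall>x\<in>N. {w, x} \<in> E"
    and "u \<in> N" "{u, cyc 0} \<in> E"
  shows "prc V E \<le> D + 1 + (m + 1) div 2"
proof -
  define q where "q = (m + 1) div 2"
  have "{u, w} \<in> E"
    using assms(8,9) by (metis insert_commute)
  then have "1 \<le> edge_degree E w"
    using edge_degree_delete_vertex[OF assms(1,2)] by simp
  then have "1 \<le> D"
    using assms(3) le_trans by blast
  moreover have "\<not> {u, cyc 0} \<subseteq> H" "w \<notin> {u, cyc 0}"
    using assms(5-7,9) cyc_in by auto
  ultimately obtain c where c: "c ` E \<subseteq> {..<D + 1 + q}" "proper_colouring E c" "c {u, cyc 0} = D"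
    "\<forall>e\<in>E. w \<in> e \<longrightarrow> c e < D"
    "\<forall>t. 4 \<le> m \<or> t mod m < 2 \<longrightarrow> c {cyc t, cyc (Suc t)} = D + 1 + t mod m mod q"
    using exists_cycle_colouring[OF assms(1-3) _ assms(10) _ _ assms(6) q_def] by blast
  have "rainbow_setting m cyc H E V w N u D c q"
    unfolding rainbow_setting_def rainbow_setting_axioms_def
    using cyclic_enumeration_axioms assms(4-10) c q_def by (auto simp: insert_commute)
  then show ?thesis
    unfolding q_def[symmetric] by (rule prc_le[OF c(1,2) rainbow_setting.rainbow_connected])
qed

theorem proposition2p3:
  fixes V :: "'a set" and E :: "'a set set" and w :: 'a
  assumes "simple_graph V E"
    and "connected_graph V E"
    and "max_degree V E + 2 \<le> card V"
    and "w \<in> V"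
    and "degree V E w = max_degree V E"
    and "hamiltonian (V - closed_nbhd V E w) (del_vertices_E V E (closed_nbhd V E w))"
  shows "real (prc V E) \<le> (real (card V) + real (max_degree V E)) / 2 + 1"
proof -
  let ?D = "max_degree V E" and ?N = "neighbours V E w" and ?H = "V - closed_nbhd V E w"
  have "finite E" and c2: "\<forall>e\<in>E. card e = 2" and deg: "\<forall>x. edge_degree E x \<le> ?D"
    using simple_graph_finite_edges[OF assms(1)] edge_degree_le_max_degree[OF assms(1)] assms(1)
    unfolding simple_graph_def by blast+
  have card_V: "card V = Suc ?D + card ?H"
    using card_eq_degree_plus_outside[OF assms(1,4)] assms(5) by simp
  then have "card ?H \<noteq> 0"
    using assms(3) by linarith
  then have "?H \<noteq> {}"
    by (metis card.empty)
  then obtain u v\<^sub>0 where u: "u \<in> ?N" "v\<^sub>0 \<in> ?H" "{u, v\<^sub>0} \<in> E"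
    using crossing_edge[OF assms(1,2,4)] by blast
  obtain cyc where cyc: "cyclic_enumeration (card ?H) cyc ?H E V" "cyc 0 = v\<^sub>0"
    using hamiltonian_cyclic_enumeration[OF assms(6) _ _ u(2)] unfolding del_vertices_E_def by blast
  have "prc V E \<le> ?D + 1 + (card ?H + 1) div 2"
    using cyclic_enumeration.prc_le_star_bridge_cycle[OF cyc(1) \<open>finite E\<close> c2 deg
        closed_nbhd_partition[OF assms(1,4)] u(1)] u(3) cyc(2) by simp
  then have "2 * prc V E \<le> card V + ?D + 2"
    using card_V by linarith
  then have "real (2 * prc V E) \<le> real (card V + ?D + 2)"
    by (rule of_nat_mono)
  then show ?thesis
    by (simp add: field_simps)
qed

end
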